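(* Suppose Assumptions 1, 2 and 3 hold and $\|\vec L\|_1>0$. Fix integers $K\ge1$, $M\ge1$ and an initial point $x_0$. Run distributed \textsc{signSGD} with majority vote for $K$ iterations: at step $k$, each worker $m\in\{1,\dots,M\}$ computes, independently of all other workers and previous steps, a mini-batch stochastic gradient $\tilde g_{m,k}$ of size $n_k$ at $x_k$, and $$x_{k+1}=x_k-\delta_k\,\mathrm{sign}\Big[\sum_{m=1}^M\mathrm{sign}(\tilde g_{m,k})\Big],\qquad \delta_k=\frac{1}{\sqrt{\|\vec L\|_1K}},\quad n_k=K.$$ Let $N=K^2$ be the number of oracle calls per worker, $g_k=\nabla f(x_k)$, $f_0=f(x_0)$. (a) Then $$\left(\mathbb{E}\Big[\frac1K\sum_{k=0}^{K-1}\|g_k\|_1\Big]\right)^2\le \frac{1}{\sqrt N}\left[\sqrt{\|\vec L\|_1}\Big(f_0-f_*+\frac12\Big)+2\|\vec\sigma\|_1\right]^2 .$$ (b) If in addition, for every $k$, $m$ and coordinate $i$, conditionally on $x_k$ the distribution of the noise $\tilde g_{m,k,i}-g_{k,i}$ is unimodal and symmetric about $0$, then $$\left(\mathbb{E}\Big[\frac1K\sum_{k=0}^{K-1}\|g_k\|_1\Big]\right)^2\le \frac{1}{\sqrt N}\left[\sqrt{\|\vec L\|_1}\Big(f_0-f_*+\frac12\Big)+\frac{2}{\sqrt M}\|\vec\sigma\|_1\right]^2 .$$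
   Context: $f:\mathbb{R}^d\to\mathbb{R}$ is differentiable with gradient $g(x)=\nabla f(x)$. Assumption 1: there is a constant $f_*$ with $f(x)\ge f_*$ for all $x$. Assumption 2: there is a vector $\vec L=(L_1,\dots,L_d)$ of non-negative constants such that for all $x,y$, $\big|f(y)-f(x)-g(x)^T(y-x)\big|\le \frac12\sum_{i=1}^d L_i(y_i-x_i)^2$. Assumption 3: upon query $x$, a stochastic gradient oracle returns a random vector $\tilde g(x)$, independent of all other oracle calls, with $\mathbb{E}[\tilde g(x)]=g(x)$ and $\mathbb{E}[(\tilde g(x)_i-g(x)_i)^2]\le\sigma_i^2$ for a vector $\vec\sigma=(\sigma_1,\dots,\sigma_d)$ of non-negative constants. A mini-batch stochastic gradient of size $n$ at $x$ is the average of $n$ independent oracle calls at $x$. $\mathrm{sign}$ acts componentwise, with $\mathrm{sign}(0)=0$. A real distribution is unimodal if its distribution function is convex on $(-\infty,\nu)$ and concave on $(\nu,\infty)$ for some mode $\nu$. *)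

theory Defs
  imports "HOL-Probability.Probability"
begin

text \<open>Componentwise sign, with sgn 0 = 0.\<close>
definition vsgn :: "real^'d \<Rightarrow> real^'d" where
  "vsgn v = (\<chi> i. sgn (v $ i))"

definition l1 :: "real^'d \<Rightarrow> real" where
  "l1 v = (\<Sum>i\<in>UNIV. \<bar>v $ i\<bar>)"

text \<open>Stochastic gradient oracle modelled as a sampling map: a call at x with
  fresh independent sample w (drawn from the sample law) returns G x w.\<close>
definition minibatch :: "(real^'d \<Rightarrow> 'w \<Rightarrow> real^'d) \<Rightarrow> nat \<Rightarrow> real^'d \<Rightarrow> (nat \<Rightarrow> 'w) \<Rightarrow> real^'d" where
  "minibatch G n x ws = (1 / real n) *\<^sub>R (\<Sum>j<n. G x (ws j))"

text \<open>Iterates of distributed signSGD with majority vote, given all samples: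
  ws (k, m, j) is the j-th sample used by worker m at step k.\<close>
primrec signsgd_mv ::
  "(real^'d \<Rightarrow> 'w \<Rightarrow> real^'d) \<Rightarrow> nat \<Rightarrow> (nat \<Rightarrow> real) \<Rightarrow> (nat \<Rightarrow> nat)
   \<Rightarrow> real^'d \<Rightarrow> (nat \<times> nat \<times> nat \<Rightarrow> 'w) \<Rightarrow> nat \<Rightarrow> real^'d" where
  "signsgd_mv G M delta n x0 ws 0 = x0"
| "signsgd_mv G M delta n x0 ws (Suc k) =
     (let x = signsgd_mv G M delta n x0 ws k in
      x - delta k *\<^sub>R vsgn (\<Sum>m<M. vsgn (minibatch G (n k) x (\<lambda>j. ws (k, m, j)))))"

definition unimodal :: "real measure \<Rightarrow> bool" where
  "unimodal \<mu> \<longleftrightarrow> (\<exists>\<nu>. convex_on {..<\<nu>} (\<lambda>t. measure \<mu> {..t})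
                        \<and> concave_on {\<nu><..} (\<lambda>t. measure \<mu> {..t}))"

definition symmetric0 :: "real measure \<Rightarrow> bool" where
  "symmetric0 \<mu> \<longleftrightarrow> distr \<mu> borel uminus = \<mu>"

definition minibatch_noise_law ::
  "(real^'d \<Rightarrow> 'w \<Rightarrow> real^'d) \<Rightarrow> 'w measure \<Rightarrow> (real^'d \<Rightarrow> real^'d) \<Rightarrow> nat \<Rightarrow> real^'d \<Rightarrow> 'd \<Rightarrow> real measure" where
  "minibatch_noise_law G P g n x i =
     distr (PiM {..<n} (\<lambda>_. P)) borel (\<lambda>ws. minibatch G n x ws $ i - g x $ i)"

end

theory Submission
  imports Defs
begin

text \<open>
  By the coordinatewise smoothness bound, one step of signSGD with step \<open>\<delta>\<close> decreases \<open>f\<close>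
  in expectation by at least \<open>\<delta> \<Sum>\<^sub>i \<bar>g\<^sub>i\<bar> (1 - 2 P[vote\<^sub>i wrong]) - \<delta>\<^sup>2 \<parallel>L\<parallel>\<^sub>1 / 2\<close>; the
  expectation may be taken with the iterate frozen, because the samples of a step are independent
  of the past. Telescoping over \<open>K\<close> steps and using \<open>f \<ge> f\<^sub>*\<close> bounds the averaged gradient
  norm once \<open>\<bar>g\<^sub>i\<bar> P[vote\<^sub>i wrong]\<close> is controlled. Each worker's mini-batch noise has variance at
  most \<open>\<sigma>\<^sub>i\<^sup>2/K\<close>. For (a), Markov's inequality on the number of wrong workers and Cantelli's
  inequality for each worker give \<open>\<bar>g\<^sub>i\<bar> P[vote\<^sub>i wrong] \<le> \<sigma>\<^sub>i/\<surd>K\<close>. For (b), Gauss's inequality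
  for unimodal symmetric noise shows that each worker is right with probability bounded away
  from \<open>1/2\<close>, and Cantelli's inequality for the number of wrong workers gains the factor \<open>1/\<surd>M\<close>.
\<close>

section \<open>Probability inequalities\<close>

lemma (in prob_space) cantelli_inequality:
  assumes Y_int: "integrable M Y" and Y2_int: "integrable M (\<lambda>w. (Y w)^2)"
    and mean: "(\<integral>w. Y w \<partial>M) = 0" and var: "(\<integral>w. (Y w)^2 \<partial>M) \<le> V" and c: "0 < c"
  shows "prob {w\<in>space M. c \<le> Y w} \<le> V / (V + c^2)"
proof -
  have "0 \<le> (\<integral>w. (Y w)^2 \<partial>M)" by (intro integral_nonneg_AE) auto
  hence V0: "0 \<le> V" using var by linarith
  \<comment> \<open>Markov's inequality for \<open>(Y + u)\<^sup>2\<close>, with the optimal shift \<open>u = V / c\<close>.\<close>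
  define u where "u = V / c"
  have u0: "0 \<le> u" using V0 c by (simp add: u_def)
  have sq: "(\<lambda>w. (Y w + u)^2) = (\<lambda>w. (Y w)^2 + (2*u) * Y w + u^2)"
    by (simp add: power2_sum algebra_simps)
  have int: "integrable M (\<lambda>w. (Y w + u)^2)"
    unfolding sq using Y_int Y2_int by auto
  have "prob {w\<in>space M. c \<le> Y w} \<le> prob {w\<in>space M. (c+u)^2 \<le> (Y w + u)^2}"
    using c u0 borel_measurable_integrable[OF Y_int]
    by (intro finite_measure_mono) (auto intro!: power_mono)
  also have "\<dots> \<le> (\<integral>w. (Y w + u)^2 \<partial>M) / (c+u)^2"
    by (rule integral_Markov_inequality_measure[OF int, where A="space M"]) (use c u0 in auto)
  also have "(\<integral>w. (Y w + u)^2 \<partial>M) = (\<integral>w. (Y w)^2 \<partial>M) + u^2"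
    unfolding sq using Y_int Y2_int mean by (simp add: prob_space)
  also have "(\<dots>) / (c+u)^2 \<le> (V + u^2)/(c+u)^2"
    using var by (intro divide_right_mono) auto
  also have "\<dots> = V/(V+c^2)"
  proof -
    have pos: "0 < c^2 + V" using c V0 by (simp add: add_pos_nonneg)
    have cu: "c + u = (c^2+V)/c" using c by (simp add: u_def field_simps power2_eq_square)
    have vu: "V + u^2 = V*(c^2+V)/c^2" using c by (simp add: u_def field_simps power2_eq_square)
    have "\<And>w. 0 < w \<Longrightarrow> (V*w/c^2)/((w/c)^2) = V/w"
      using c by (simp add: power_divide field_simps power2_eq_square)
    from this[OF pos] show ?thesis unfolding cu vu by (simp add: add.commute)
  qed
  finally show ?thesis .
qed

lemma (in prob_space) integral_indep_var_eq_iterated: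
  fixes X Y :: "'a \<Rightarrow> 'b" and F :: "'b \<Rightarrow> 'b \<Rightarrow> real"
  assumes indep: "indep_var N1 X N2 Y"
    and F: "(\<lambda>(x,y). F x y) \<in> borel_measurable (N1 \<Otimes>\<^sub>M N2)" and bounded: "\<And>x y. \<bar>F x y\<bar> \<le> C"
  shows "(\<integral>\<omega>. F (X \<omega>) (Y \<omega>) \<partial>M) = (\<integral>\<omega>. (\<integral>\<omega>'. F (X \<omega>) (Y \<omega>') \<partial>M) \<partial>M)"
proof -
  have X: "X \<in> M \<rightarrow>\<^sub>M N1" and Y: "Y \<in> M \<rightarrow>\<^sub>M N2"
    and distr_pair: "distr M N1 X \<Otimes>\<^sub>M distr M N2 Y = distr M (N1 \<Otimes>\<^sub>M N2) (\<lambda>x. (X x, Y x))"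
    using indep unfolding indep_var_distribution_eq by auto
  interpret DX: prob_space "distr M N1 X" by (rule prob_space_distr[OF X])
  interpret DY: prob_space "distr M N2 Y" by (rule prob_space_distr[OF Y])
  interpret DXY: pair_prob_space "distr M N1 X" "distr M N2 Y" ..
  have F': "(\<lambda>(x,y). F x y) \<in> borel_measurable (distr M N1 X \<Otimes>\<^sub>M distr M N2 Y)"
    using F by (simp cong: measurable_cong_sets)
  have intF: "integrable (distr M N1 X \<Otimes>\<^sub>M distr M N2 Y) (\<lambda>(x,y). F x y)"
    using bounded by (intro DXY.P.integrable_const_bound[where B=C] F') (auto split: prod.split)
  have "(\<integral>\<omega>. F (X \<omega>) (Y \<omega>) \<partial>M) = (\<integral>p. (\<lambda>(x,y). F x y) p \<partial>distr M (N1 \<Otimes>\<^sub>M N2) (\<lambda>x. (X x, Y x)))"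
    by (subst integral_distr) (auto intro!: measurable_Pair X Y F)
  also have "\<dots> = (\<integral>p. (\<lambda>(x,y). F x y) p \<partial>(distr M N1 X \<Otimes>\<^sub>M distr M N2 Y))"
    by (simp add: distr_pair)
  also have "\<dots> = (\<integral>x. (\<integral>y. F x y \<partial>distr M N2 Y) \<partial>distr M N1 X)"
    by (rule DXY.integral_fst[OF intF, symmetric])
  also have "\<dots> = (\<integral>\<omega>. (\<integral>y. F (X \<omega>) y \<partial>distr M N2 Y) \<partial>M)"
  proof (rule integral_distr[OF X])
    show "(\<lambda>x. \<integral>y. F x y \<partial>distr M N2 Y) \<in> borel_measurable N1"
      using DY.borel_measurable_lebesgue_integral[of F N1] F by (simp cong: measurable_cong_sets)
  qed
  also have "\<dots> = (\<integral>\<omega>. (\<integral>\<omega>'. F (X \<omega>) (Y \<omega>') \<partial>M) \<partial>M)"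
  proof (rule Bochner_Integration.integral_cong[OF refl])
    fix \<omega> assume "\<omega> \<in> space M"
    hence "X \<omega> \<in> space N1" using X by (auto dest: measurable_space)
    hence "(\<lambda>y. F (X \<omega>) y) \<in> borel_measurable N2" using F by measurable
    thus "(\<integral>y. F (X \<omega>) y \<partial>distr M N2 Y) = (\<integral>\<omega>'. F (X \<omega>) (Y \<omega>') \<partial>M)"
      by (rule integral_distr[OF Y])
  qed
  finally show ?thesis .
qed

lemma (in prob_space) integral_square_sum_indep:
  fixes Y :: "'i \<Rightarrow> 'a \<Rightarrow> real"
  assumes A: "finite A"
    and int: "\<And>j. j \<in> A \<Longrightarrow> integrable M (Y j)"
    and int2: "\<And>j. j \<in> A \<Longrightarrow> integrable M (\<lambda>\<omega>. (Y j \<omega>)^2)"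
    and mean: "\<And>j. j \<in> A \<Longrightarrow> (\<integral>\<omega>. Y j \<omega> \<partial>M) = 0"
    and indep: "\<And>j j'. j \<in> A \<Longrightarrow> j' \<in> A \<Longrightarrow> j \<noteq> j' \<Longrightarrow> indep_var borel (Y j) borel (Y j')"
  shows "integrable M (\<lambda>\<omega>. (\<Sum>j\<in>A. Y j \<omega>)^2)"
    and "(\<integral>\<omega>. (\<Sum>j\<in>A. Y j \<omega>)^2 \<partial>M) = (\<Sum>j\<in>A. \<integral>\<omega>. (Y j \<omega>)^2 \<partial>M)"
proof -
  have sq: "(\<lambda>\<omega>. (\<Sum>j\<in>A. Y j \<omega>)^2) = (\<lambda>\<omega>. \<Sum>j\<in>A. \<Sum>j'\<in>A. Y j \<omega> * Y j' \<omega>)"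
    by (simp add: power2_eq_square sum_product)
  have int_prod: "integrable M (\<lambda>\<omega>. Y j \<omega> * Y j' \<omega>)" if "j \<in> A" "j' \<in> A" for j j'
  proof (cases "j = j'")
    case True thus ?thesis using int2[OF that(1)] by (simp add: power2_eq_square)
  next
    case False
    thus ?thesis using indep_var_integrable[OF indep[OF that False] int[OF that(1)] int[OF that(2)]] by simp
  qed
  show "integrable M (\<lambda>\<omega>. (\<Sum>j\<in>A. Y j \<omega>)^2)"
    unfolding sq by (auto intro!: Bochner_Integration.integrable_sum int_prod)
  have "(\<integral>\<omega>. (\<Sum>j\<in>A. Y j \<omega>)^2 \<partial>M) = (\<Sum>j\<in>A. \<Sum>j'\<in>A. \<integral>\<omega>. Y j \<omega> * Y j' \<omega> \<partial>M)"
    unfolding sq by (simp add: Bochner_Integration.integral_sum Bochner_Integration.integrable_sum int_prod)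
  also have "\<dots> = (\<Sum>j\<in>A. \<Sum>j'\<in>A. if j' = j then \<integral>\<omega>. (Y j \<omega>)^2 \<partial>M else 0)"
  proof (intro sum.cong refl)
    fix j j' assume jj: "j \<in> A" "j' \<in> A"
    show "(\<integral>\<omega>. Y j \<omega> * Y j' \<omega> \<partial>M) = (if j' = j then \<integral>\<omega>. (Y j \<omega>)^2 \<partial>M else 0)"
    proof (cases "j' = j")
      case True thus ?thesis by (simp add: power2_eq_square)
    next
      case False
      have "(\<integral>\<omega>. Y j \<omega> * Y j' \<omega> \<partial>M) = (\<integral>\<omega>. Y j \<omega> \<partial>M) * (\<integral>\<omega>. Y j' \<omega> \<partial>M)"
        using False by (intro indep_var_lebesgue_integral indep jj int) auto
      thus ?thesis using mean jj False by simp
    qed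
  qed
  also have "\<dots> = (\<Sum>j\<in>A. \<integral>\<omega>. (Y j \<omega>)^2 \<partial>M)" using A by simp
  finally show "(\<integral>\<omega>. (\<Sum>j\<in>A. Y j \<omega>)^2 \<partial>M) = (\<Sum>j\<in>A. \<integral>\<omega>. (Y j \<omega>)^2 \<partial>M)" .
qed

lemma has_integral_poly2:
  fixes u v \<alpha> \<beta> :: real
  assumes "u \<le> v"
  shows "((\<lambda>t. 2*\<alpha>*t + \<beta>*t^2) has_integral (\<alpha>*(v^2 - u^2) + \<beta>*(v^3 - u^3)/3)) {u..v}"
proof -
  have "((\<lambda>t. 2*\<alpha>*t + \<beta>*t^2) has_integral ((\<alpha> * v^2 + \<beta> * v^3 / 3) - (\<alpha> * u^2 + \<beta> * u^3 / 3))) {u..v}"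
  proof (rule fundamental_theorem_of_calculus[OF assms])
    fix x :: real assume "x \<in> {u..v}"
    have "((\<lambda>t. \<alpha>*t^2 + \<beta>*t^3/3) has_real_derivative (2*\<alpha>*x + \<beta>*x^2)) (at x within {u..v})"
      by (auto intro!: derivative_eq_intros simp: power2_eq_square)
    thus "((\<lambda>t. \<alpha>*t^2 + \<beta>*t^3/3) has_vector_derivative (2*\<alpha>*x + \<beta>*x^2)) (at x within {u..v})"
      by (simp add: has_real_derivative_iff_has_vector_derivative)
  qed
  thus ?thesis by (simp add: algebra_simps diff_divide_distrib)
qed

lemma ennreal_square_eq_nn_integral:
  fixes z :: real
  shows "ennreal (z^2) = (\<integral>\<^sup>+ t. ennreal (indicator {0..\<bar>z\<bar>} t * (2*t)) \<partial>lborel)"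
proof -
  have "((\<lambda>t. 2*1*t + 0*t^2) has_integral (1*(\<bar>z\<bar>^2 - 0^2) + 0*(\<bar>z\<bar>^3 - 0^3)/3)) {0..\<bar>z\<bar>}"
    by (rule has_integral_poly2) simp
  hence "((\<lambda>t. 2*t) has_integral z^2) {0..\<bar>z\<bar>}" by simp
  from nn_integral_has_integral_lebesgue[OF _ this] show ?thesis by simp
qed

lemma nn_integral_square_eq_tail:
  fixes M :: "real measure"
  assumes "prob_space M" and sets_M: "sets M = sets borel"
  shows "(\<integral>\<^sup>+ z. ennreal (z^2) \<partial>M)
           = (\<integral>\<^sup>+ t. ennreal (indicator {0..} t * (2*t * measure M {z. t \<le> \<bar>z\<bar>})) \<partial>lborel)"
proof -
  interpret prob_space M by fact
  note [measurable_cong] = sets_M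
  let ?h = "\<lambda>z t. ennreal (indicator {0..\<bar>z\<bar>} t * (2*t))"
  have h: "(\<lambda>(z,t). ?h z t) \<in> borel_measurable (M \<Otimes>\<^sub>M lborel)"
  proof -
    have "(\<lambda>(z,t). ?h z t) = (\<lambda>(z,t). ennreal (if 0 \<le> t \<and> t \<le> \<bar>z\<bar> then 2*t else 0))"
      by (auto simp: fun_eq_iff split: split_indicator)
    thus ?thesis by simp
  qed
  interpret pair_sigma_finite M lborel
    by (intro pair_sigma_finite.intro)
       (simp_all add: prob_space_imp_sigma_finite prob_space_axioms lborel.sigma_finite_measure_axioms)
  have tail: "(\<integral>\<^sup>+ z. ?h z t \<partial>M) = ennreal (indicator {0..} t * (2*t * prob {z. t \<le> \<bar>z\<bar>}))" for t
  proof (cases "0 \<le> t")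
    case True
    have "(\<integral>\<^sup>+ z. ?h z t \<partial>M) = (\<integral>\<^sup>+ z. ennreal (2*t) * indicator {z. t \<le> \<bar>z\<bar>} z \<partial>M)"
      using True by (intro nn_integral_cong) (auto split: split_indicator)
    also have "\<dots> = ennreal (2*t) * emeasure M {z. t \<le> \<bar>z\<bar>}"
      by (rule nn_integral_cmult_indicator) simp
    finally show ?thesis
      using True by (simp add: emeasure_eq_measure ennreal_mult)
  qed (auto split: split_indicator)
  have "(\<integral>\<^sup>+ z. ennreal (z^2) \<partial>M) = (\<integral>\<^sup>+ z. (\<integral>\<^sup>+ t. ?h z t \<partial>lborel) \<partial>M)"
    by (simp add: ennreal_square_eq_nn_integral)
  also have "\<dots> = (\<integral>\<^sup>+ t. (\<integral>\<^sup>+ z. ?h z t \<partial>M) \<partial>lborel)"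
    by (rule Fubini'[OF h, symmetric])
  finally show ?thesis by (simp only: tail)
qed

lemma borel_measurable_vec_lambda:
  fixes h :: "'i::finite \<Rightarrow> 'a \<Rightarrow> real"
  assumes "\<And>i. h i \<in> borel_measurable N"
  shows "(\<lambda>z. (\<chi> i. h i z) :: real^'i) \<in> borel_measurable N"
proof (subst borel_measurable_euclidean_space, intro ballI)
  fix b :: "real^'i" assume "b \<in> Basis"
  then obtain i where b: "b = axis i 1" by (auto simp: Basis_vec_def)
  show "(\<lambda>z. (\<chi> i. h i z) \<bullet> b) \<in> borel_measurable N"
    unfolding b inner_axis using assms[of i] by simp
qed

section \<open>Gauss's inequality for symmetric unimodal laws\<close>

locale symmetric_unimodal = prob_space \<mu> for \<mu> :: "real measure" +
  assumes sets_eq_borel [measurable_cong]: "sets \<mu> = sets borel"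
    and unimodal: "unimodal \<mu>" and symmetric: "symmetric0 \<mu>"
begin

lemma space_eq_UNIV: "space \<mu> = UNIV"
  using sets_eq_imp_space_eq[OF sets_eq_borel] by simp

lemma prob_atLeast_eq: "prob {x..} = prob {..-x}"
proof -
  have "prob {x..} = measure (distr \<mu> borel uminus) {x..}"
    using symmetric by (simp add: symmetric0_def)
  also have "\<dots> = prob (uminus -` {x..} \<inter> space \<mu>)" by (rule measure_distr) auto
  also have "uminus -` {x..} \<inter> space \<mu> = {..-x}" by (auto simp: space_eq_UNIV)
  finally show ?thesis .
qed

lemma left_tail_le_half: assumes "0 < x" shows "2 * prob {..-x} \<le> 1"
proof -
  have "prob ({..-x} \<union> {x..}) = prob {..-x} + prob {x..}"
    using assms by (intro finite_measure_Union) auto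
  moreover have "prob ({..-x} \<union> {x..}) \<le> 1" by (rule prob_le_1)
  ultimately show ?thesis using prob_atLeast_eq[of x] by simp
qed

lemma prob_abs_ge: assumes "0 < t" shows "prob {z. t \<le> \<bar>z\<bar>} = 2 * prob {..-t}"
proof -
  have "{z. t \<le> \<bar>z\<bar>} = {..-t} \<union> {t..}" using assms by auto
  hence "prob {z. t \<le> \<bar>z\<bar>} = prob {..-t} + prob {t..}"
    using assms by (simp, intro finite_measure_Union) auto
  thus ?thesis using prob_atLeast_eq[of t] by simp
qed

lemma prob_singleton_right_of_mode:
  assumes concave: "concave_on {\<nu><..} (\<lambda>t. prob {..t})" and x: "\<nu> < x"
  shows "prob {x} = 0"
proof -
  let ?F = "\<lambda>t. prob {..t}"
  have "continuous_on {\<nu><..} (\<lambda>t. - ?F t)"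
    using concave unfolding concave_on_def by (intro convex_on_continuous) auto
  hence "continuous_on {\<nu><..} ?F" using continuous_on_minus by fastforce
  hence "isCont ?F x" using x by (simp add: continuous_on_eq_continuous_at)
  hence lim: "(?F \<longlongrightarrow> ?F x) (at_left x)"
    by (simp add: isCont_def filterlim_at_split)
  have "\<forall>\<^sub>F t in at_left x. ?F t \<le> prob {..<x}"
    unfolding eventually_at_filter
    by (intro always_eventually allI impI finite_measure_mono) auto
  hence le: "?F x \<le> prob {..<x}"
    by (rule tendsto_upperbound[OF lim _ trivial_limit_at_left_real])
  have "prob {x} = prob ({..x} - {..<x})" by (intro arg_cong[where f=prob]) auto
  also have "\<dots> = ?F x - prob {..<x}" by (intro finite_measure_Diff) auto
  finally show ?thesis using le measure_nonneg[of \<mu> "{x}"] by linarith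
qed

lemma left_tail_right_of_mode:
  assumes concave: "concave_on {\<nu><..} (\<lambda>t. prob {..t})" and x: "\<nu> < x"
  shows "prob {..-x} = 1 - prob {..x}"
proof -
  have "prob {..-x} = prob {x..}" using prob_atLeast_eq by simp
  also have "{x..} = space \<mu> - {..<x}" by (auto simp: space_eq_UNIV)
  also have "prob (space \<mu> - {..<x}) = 1 - prob {..<x}" by (intro prob_compl) auto
  also have "prob {..<x} = prob {..x}"
  proof -
    have "prob {..x} = prob ({..<x} \<union> {x})" by (intro arg_cong[where f=prob]) auto
    also have "\<dots> = prob {..<x} + prob {x}" by (intro finite_measure_Union) auto
    finally show ?thesis using prob_singleton_right_of_mode[OF concave x] by simp
  qed
  finally show ?thesis .
qed

text \<open>
  The left tail \<open>p x = prob {..-x}\<close> is convex on \<open>(0, \<infinity>)\<close>: to the left of the mode this is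
  convexity of the distribution function, to its right concavity, read through the symmetry
  \<open>p x = 1 - prob {..x}\<close>.
\<close>
lemma left_tail_convex:
  assumes e: "0 < e" "e < a" and al: "a < l"
  shows "prob {..-a} * (l - e) \<le> (l - a) * prob {..-e} + (a - e) * prob {..-l}"
proof -
  let ?F = "\<lambda>t. prob {..t}"
  let ?p = "\<lambda>x. prob {..-x}"
  define \<theta> where "\<theta> = (a - e) / (l - e)"
  have \<theta>: "0 \<le> \<theta>" "\<theta> \<le> 1" using e al by (auto simp: \<theta>_def field_simps)
  have le: "l - e > 0" using e al by simp
  have \<theta>_mult: "\<theta> * (l - e) = a - e" using le by (simp add: \<theta>_def)
  have comb: "(1 - \<theta>) * e + \<theta> * l = a"
  proof -
    have "(1 - \<theta>) * e + \<theta> * l = e + \<theta> * (l - e)" by (simp add: algebra_simps)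
    thus ?thesis using \<theta>_mult by simp
  qed
  have "?p a \<le> (1 - \<theta>) * ?p e + \<theta> * ?p l"
  proof -
    obtain \<nu> where cv: "convex_on {..<\<nu>} ?F" and cc: "concave_on {\<nu><..} ?F"
      using unimodal unfolding unimodal_def by blast
    show ?thesis
    proof (cases "\<nu> > 0")
      case True
      have "?F ((1 - \<theta>) *\<^sub>R (-e) + \<theta> *\<^sub>R (-l)) \<le> (1 - \<theta>) * ?F (-e) + \<theta> * ?F (-l)"
        by (rule convex_onD[OF cv \<theta>]) (use True e al in auto)
      moreover have "(1 - \<theta>) *\<^sub>R (-e) + \<theta> *\<^sub>R (-l) = - a" using comb by simp
      ultimately show ?thesis by simp
    next
      case False
      have cv': "convex_on {\<nu><..} (\<lambda>t. - ?F t)" using cc by (simp add: concave_on_def)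
      have "- ?F ((1 - \<theta>) *\<^sub>R e + \<theta> *\<^sub>R l) \<le> (1 - \<theta>) * (- ?F e) + \<theta> * (- ?F l)"
        by (rule convex_onD[OF cv' \<theta>]) (use False e al in auto)
      moreover have "(1 - \<theta>) *\<^sub>R e + \<theta> *\<^sub>R l = a" using comb by simp
      ultimately have "(1 - \<theta>) * ?F e + \<theta> * ?F l \<le> ?F a" by simp
      moreover have "?p a = 1 - ?F a" "?p e = 1 - ?F e" "?p l = 1 - ?F l"
        using left_tail_right_of_mode[OF cc] False e al by auto
      ultimately show ?thesis by (simp only:) (simp add: algebra_simps)
    qed
  qed
  hence "?p a * (l - e) \<le> ((1 - \<theta>) * ?p e + \<theta> * ?p l) * (l - e)"
    using le by (intro mult_right_mono) auto
  also have "\<dots> = ((1 - \<theta>) * (l - e)) * ?p e + (\<theta> * (l - e)) * ?p l" by (simp add: algebra_simps)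
  also have "(1 - \<theta>) * (l - e) = l - a" using \<theta>_mult by (simp add: algebra_simps)
  finally show ?thesis using \<theta>_mult by simp
qed

text \<open>Letting \<open>e \<rightarrow> 0\<close> in \<open>left_tail_convex\<close>, where \<open>2 p e \<le> 1\<close>.\<close>
lemma central_mass_ratio:
  assumes a: "0 < a" "a \<le> l"
  shows "a * (1 - 2 * prob {..-l}) \<le> l * (1 - 2 * prob {..-a})"
proof (cases "a = l")
  case False
  hence al: "a < l" using a by simp
  define D where "D = l * (1 - 2 * prob {..-a}) - a * (1 - 2 * prob {..-l})"
  have ra: "0 \<le> 1 - 2 * prob {..-a}" using left_tail_le_half[OF a(1)] by simp
  have rl: "1 - 2 * prob {..-l} \<le> 1" using measure_nonneg[of \<mu> "{..-l}"] by simp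
  have bound: "- e \<le> D" if e: "0 < e" "e < a" for e
  proof -
    have "(l - a) * (2 * prob {..-e}) \<le> (l - a) * 1"
      using al left_tail_le_half[OF e(1)] by (intro mult_left_mono) auto
    with left_tail_convex[OF e al]
    have "2 * prob {..-a} * (l - e) \<le> (l - a) + 2 * (a - e) * prob {..-l}"
      by (simp add: algebra_simps)
    hence "D \<ge> e * ((1 - 2 * prob {..-a}) - (1 - 2 * prob {..-l}))"
      unfolding D_def by (simp add: algebra_simps)
    moreover have "-1 \<le> (1 - 2 * prob {..-a}) - (1 - 2 * prob {..-l})" using ra rl by linarith
    hence "e * (-1) \<le> e * ((1 - 2 * prob {..-a}) - (1 - 2 * prob {..-l}))"
      using e by (intro mult_left_mono) auto
    ultimately show ?thesis by simp
  qed
  have "0 \<le> D"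
  proof (rule ccontr)
    assume "\<not> 0 \<le> D"
    define e where "e = min (a/2) (-D/2)"
    have "0 < e" "e < a" using \<open>\<not> 0 \<le> D\<close> a by (auto simp: e_def)
    from bound[OF this] show False using \<open>\<not> 0 \<le> D\<close> by (simp add: e_def)
  qed
  thus ?thesis by (simp add: D_def)
qed simp

lemma prob_abs_ge_below:
  assumes "0 \<le> t" "t \<le> a" "0 < a"
  shows "2 * prob {..-a} \<le> prob {z. t \<le> \<bar>z\<bar>}"
proof -
  have "prob {z. a \<le> \<bar>z\<bar>} \<le> prob {z. t \<le> \<bar>z\<bar>}"
    using assms by (intro finite_measure_mono) auto
  thus ?thesis using prob_abs_ge[OF assms(3)] by simp
qed

lemma prob_abs_ge_above:
  assumes "0 < a" "a < t"
  shows "1 - t * (1 - 2 * prob {..-a}) / a \<le> prob {z. t \<le> \<bar>z\<bar>}"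
proof -
  have "a * (1 - 2 * prob {..-t}) \<le> t * (1 - 2 * prob {..-a})"
    using assms by (intro central_mass_ratio) auto
  hence "1 - 2 * prob {..-t} \<le> t * (1 - 2 * prob {..-a}) / a"
    using assms by (simp add: field_simps)
  thus ?thesis using prob_abs_ge[of t] assms by simp
qed

lemma prob_abs_ge_piecewise:
  assumes a: "0 < a" and t: "0 \<le> t"
  defines "r \<equiv> 1 - 2 * prob {..-a}"
  shows "indicator {0..a} t * (2*(1-r)*t) + indicator {a<..c} t * (2*t + (-2*r/a)*t^2)
           \<le> 2*t * prob {z. t \<le> \<bar>z\<bar>}"
proof (cases "t \<le> a")
  case True
  have "1 - r \<le> prob {z. t \<le> \<bar>z\<bar>}" using prob_abs_ge_below[OF t True a] by (simp add: r_def)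
  hence "2*t*(1-r) \<le> 2*t * prob {z. t \<le> \<bar>z\<bar>}" using t by (intro mult_left_mono) auto
  moreover have "indicator {0..a} t = (1::real)" "indicator {a<..c} t = (0::real)" using t True by auto
  ultimately show ?thesis by (simp add: mult.commute mult.left_commute)
next
  case False
  have "1 - t * r / a \<le> prob {z. t \<le> \<bar>z\<bar>}" using prob_abs_ge_above[of a t] a False by (simp add: r_def)
  hence "2*t*(1 - t * r / a) \<le> 2*t * prob {z. t \<le> \<bar>z\<bar>}" using t by (intro mult_left_mono) auto
  moreover have "2*t + (-2*r/a)*t^2 = 2*t*(1 - t * r / a)" by (simp add: algebra_simps power2_eq_square)
  ultimately have upper: "2*t + (-2*r/a)*t^2 \<le> 2*t * prob {z. t \<le> \<bar>z\<bar>}" by linarith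
  have lower: "indicator {0..a} t = (0::real)" using False by simp
  show ?thesis
  proof (cases "t \<le> c")
    case True
    hence "indicator {a<..c} t = (1::real)" using False by simp
    thus ?thesis using lower upper by simp
  next
    case False
    hence "indicator {a<..c} t = (0::real)" by simp
    moreover have "0 \<le> 2*t * prob {z. t \<le> \<bar>z\<bar>}" using t by simp
    ultimately show ?thesis using lower by simp
  qed
qed

text \<open>
  Integrate the tail bounds above against \<open>2t dt\<close>: on \<open>[0, a]\<close> the tail is at least \<open>1 - r\<close>,
  on \<open>(a, c]\<close> at least \<open>1 - t r / a\<close>, where \<open>r = 1 - 2 prob {..-a}\<close>.
\<close>
lemma second_moment_ge:
  assumes a: "0 < a" and c: "a \<le> c" and cr: "c * (1 - 2 * prob {..-a}) \<le> a"
  defines "r \<equiv> 1 - 2 * prob {..-a}"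
  shows "ennreal (a^2 * (1 - r) + ((c^2 - a^2) - 2 * r * (c^3 - a^3) / (3*a))) \<le> (\<integral>\<^sup>+ z. ennreal (z^2) \<partial>\<mu>)"
proof -
  have r0: "0 \<le> r" using left_tail_le_half[OF a] by (simp add: r_def)
  have upper_nonneg: "0 \<le> 2 * 1 * t + - 2 * r / a * t\<^sup>2" if t: "t \<in> {a..c}" for t
  proof -
    have "t * r \<le> c * r" using t r0 by (intro mult_right_mono) auto
    hence "t * r / a \<le> 1" using cr a by (simp add: r_def)
    hence "0 \<le> 2 * t * (1 - t * r / a)" using t a by simp
    thus ?thesis by (simp add: algebra_simps power2_eq_square)
  qed
  let ?lower = "\<lambda>t. indicator {0..a} t * (2*(1-r)*t + 0*t^2)"
  let ?upper = "\<lambda>t. indicator {a<..c} t * (2*1*t + (-2*r/a)*t^2)"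
  have lower: "(\<integral>\<^sup>+ t. ennreal (?lower t) \<partial>lborel) = ennreal ((1-r)*(a^2 - 0^2) + 0*(a^3-0^3)/3)"
    using a r0 by (intro nn_integral_has_integral_lebesgue has_integral_poly2)
       (auto simp: r_def intro!: mult_nonneg_nonneg)
  have "(\<integral>\<^sup>+ t. ennreal (?upper t) \<partial>lborel)
          = (\<integral>\<^sup>+ t. ennreal (indicator {a..c} t * (2*1*t + (-2*r/a)*t^2)) \<partial>lborel)"
    by (intro nn_integral_cong_AE, rule AE_mp[OF AE_lborel_singleton[of a]])
       (auto split: split_indicator)
  also have "\<dots> = ennreal (1*(c^2 - a^2) + (-2*r/a)*(c^3-a^3)/3)"
    by (intro nn_integral_has_integral_lebesgue has_integral_poly2 c upper_nonneg)
  finally have upper: "(\<integral>\<^sup>+ t. ennreal (?upper t) \<partial>lborel) = ennreal (1*(c^2 - a^2) + (-2*r/a)*(c^3-a^3)/3)" .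
  have upper_int_nonneg: "0 \<le> 1*(c^2 - a^2) + (-2*r/a)*(c^3-a^3)/3"
    by (rule has_integral_nonneg[OF has_integral_poly2[OF c] upper_nonneg])
  have lower_int_nonneg: "0 \<le> (1-r)*(a^2 - 0^2) + 0*(a^3-0^3)/3"
    using r0 left_tail_le_half[OF a] by (simp add: r_def)
  have tail_ge: "ennreal (?lower t) + ennreal (?upper t)
                   \<le> ennreal (indicator {0..} t * (2*t * prob {z. t \<le> \<bar>z\<bar>}))" for t
  proof (cases "0 \<le> t")
    case True
    have "0 \<le> ?lower t" using True left_tail_le_half[OF a] by (simp add: r_def split: split_indicator)
    moreover have "0 \<le> ?upper t" using upper_nonneg[of t] by (simp split: split_indicator)
    ultimately have "ennreal (?lower t) + ennreal (?upper t) = ennreal (?lower t + ?upper t)"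
      by (rule ennreal_plus[symmetric])
    also have "?lower t + ?upper t \<le> 2*t * prob {z. t \<le> \<bar>z\<bar>}"
      using prob_abs_ge_piecewise[OF a True, of c] by (simp add: r_def)
    finally show ?thesis using True by (simp add: ennreal_leI)
  qed (use a in \<open>auto split: split_indicator\<close>)
  have "a^2 * (1 - r) + ((c^2 - a^2) - 2 * r * (c^3 - a^3) / (3*a))
          = ((1-r)*(a^2 - 0^2) + 0*(a^3-0^3)/3) + (1*(c^2 - a^2) + (-2*r/a)*(c^3-a^3)/3)"
    using a by (simp add: field_simps)
  hence "ennreal (a^2 * (1 - r) + ((c^2 - a^2) - 2 * r * (c^3 - a^3) / (3*a)))
          = (\<integral>\<^sup>+ t. ennreal (?lower t) \<partial>lborel) + (\<integral>\<^sup>+ t. ennreal (?upper t) \<partial>lborel)"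
    by (simp only: lower upper ennreal_plus[OF lower_int_nonneg upper_int_nonneg])
  also have "\<dots> = (\<integral>\<^sup>+ t. ennreal (?lower t) + ennreal (?upper t) \<partial>lborel)"
    by (rule nn_integral_add[symmetric]) auto
  also have "\<dots> \<le> (\<integral>\<^sup>+ t. ennreal (indicator {0..} t * (2*t * prob {z. t \<le> \<bar>z\<bar>})) \<partial>lborel)"
    by (intro nn_integral_mono tail_ge)
  also have "\<dots> = (\<integral>\<^sup>+ z. ennreal (z^2) \<partial>\<mu>)"
    by (rule nn_integral_square_eq_tail[OF prob_space_axioms sets_eq_borel, symmetric])
  finally show ?thesis .
qed

text \<open>
  With \<open>r = 1 - 2 prob {..-a}\<close>, the choice \<open>c = a / r\<close> in \<open>second_moment_ge\<close> gives
  \<open>a\<^sup>2 (1 - r\<^sup>3) / 3 \<le> T r\<^sup>2\<close>.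
\<close>
lemma gauss_inequality:
  assumes a: "0 < a" and int: "integrable \<mu> (\<lambda>z. z^2)" and T: "(\<integral>z. z^2 \<partial>\<mu>) \<le> T"
  shows "a^2 * (1 - (1 - 2 * prob {..-a})^2) \<le> 4 * T * (1 - 2 * prob {..-a})^2"
proof -
  define r where "r = 1 - 2 * prob {..-a}"
  define S where "S = (\<integral>z. z^2 \<partial>\<mu>)"
  have r0: "0 \<le> r" using left_tail_le_half[OF a] by (simp add: r_def)
  have r1: "r \<le> 1" by (simp add: r_def)
  have S0: "0 \<le> S" unfolding S_def by (intro integral_nonneg_AE) auto
  have S_nn: "(\<integral>\<^sup>+ z. ennreal (z^2) \<partial>\<mu>) = ennreal S"
    unfolding S_def by (rule nn_integral_eq_integral[OF int]) auto
  have lb: "a^2 * (1 - r) + ((c^2 - a^2) - 2 * r * (c^3 - a^3) / (3*a)) \<le> S"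
    if c: "a \<le> c" "c * r \<le> a" for c
  proof -
    have "ennreal (a^2 * (1 - r) + ((c^2 - a^2) - 2 * r * (c^3 - a^3) / (3*a))) \<le> ennreal S"
      using second_moment_ge[OF a c(1)] c(2) S_nn by (simp add: r_def)
    thus ?thesis using S0 by (simp add: ennreal_le_iff)
  qed
  have r_pos: "0 < r"
  proof (rule ccontr)
    assume "\<not> 0 < r"
    hence r00: "r = 0" using r0 by simp
    define c where "c = max a (sqrt S + 1)"
    have "a \<le> c" "c * r \<le> a" using a r00 by (auto simp: c_def)
    from lb[OF this] have "c^2 \<le> S" using r00 by simp
    moreover have "(sqrt S + 1)^2 \<le> c^2" using S0 by (intro power_mono) (auto simp: c_def)
    moreover have "(sqrt S + 1)^2 > S" using S0 by (simp add: power2_sum add_pos_nonneg)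
    ultimately show False by simp
  qed
  define c where "c = a / r"
  have "a \<le> c" using a r_pos r1 by (simp add: c_def field_simps)
  moreover have "c * r \<le> a" using r_pos by (simp add: c_def)
  ultimately have L: "a^2 * (1 - r) + ((c^2 - a^2) - 2 * r * (c^3 - a^3) / (3*a)) \<le> S" by (rule lb)
  have "(a^2 * (1 - r) + ((c^2 - a^2) - 2 * r * (c^3 - a^3) / (3*a))) * r^2 = a^2 * (1 - r^3) / 3"
    using a r_pos by (simp add: c_def field_simps power2_eq_square power3_eq_cube)
  hence "a^2 * (1 - r^3) / 3 \<le> S * r^2"
    using mult_right_mono[OF L, of "r^2"] by simp
  also have "S * r^2 \<le> T * r^2" using T by (intro mult_right_mono) (auto simp: S_def)
  finally have "4 * (a^2 * (1 - r^3) / 3) \<le> 4 * T * r^2" by simp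
  moreover have "a^2 * (1 - r^2) \<le> 4 * (a^2 * (1 - r^3) / 3)"
  proof -
    have "0 \<le> a^2 * ((1 - r) * (4*r^2 + r + 1))" using r0 r1 by (intro mult_nonneg_nonneg) auto
    thus ?thesis by (simp add: algebra_simps power2_eq_square power3_eq_cube)
  qed
  ultimately show ?thesis by (simp add: r_def)
qed

end

section \<open>Coordinatewise smoothness\<close>

lemma l1_nonneg: "0 \<le> l1 v"
  unfolding l1_def by (intro sum_nonneg) auto

lemma continuous_bounded_on_cball:
  fixes h :: "'a::heine_borel \<Rightarrow> real"
  assumes "continuous_on UNIV h"
  obtains B where "\<And>y. y \<in> cball c r \<Longrightarrow> \<bar>h y\<bar> \<le> B"
  using continuous_on_compact_bound[OF compact_cball[of c r] continuous_on_subset[OF assms subset_UNIV]]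
  by (metis real_norm_def)

locale coordinatewise_smooth =
  fixes f :: "real^'d \<Rightarrow> real" and g :: "real^'d \<Rightarrow> real^'d" and L :: "real^'d"
  assumes gradient: "\<And>x. (f has_derivative (\<lambda>h. g x \<bullet> h)) (at x)"
    and L_nonneg: "\<And>i. L $ i \<ge> 0"
    and smooth: "\<And>x y. \<bar>f y - f x - g x \<bullet> (y - x)\<bar> \<le> (1/2) * (\<Sum>i\<in>UNIV. L $ i * (y $ i - x $ i)^2)"
begin

definition quad_L :: "real^'d \<Rightarrow> real" where
  "quad_L w = (\<Sum>j\<in>UNIV. L $ j * (w $ j)^2)"

lemma l1_L_eq_sum: "l1 L = (\<Sum>j\<in>UNIV. L $ j)"
  unfolding l1_def using L_nonneg by simp

lemma quad_L_le: "quad_L w \<le> l1 L * (norm w)^2"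
proof -
  have "quad_L w \<le> (\<Sum>j\<in>UNIV. L $ j * (norm w)^2)" unfolding quad_L_def
  proof (intro sum_mono mult_left_mono L_nonneg)
    fix j
    have "\<bar>w $ j\<bar>^2 \<le> (norm w)^2" using component_le_norm_cart[of w j] by (intro power_mono) auto
    thus "(w $ j)^2 \<le> (norm w)^2" by simp
  qed
  also have "\<dots> = l1 L * (norm w)^2" by (simp add: l1_L_eq_sum sum_distrib_right)
  finally show ?thesis .
qed

lemma quad_L_add_le: "quad_L (u + w) \<le> 2 * quad_L u + 2 * quad_L w"
proof -
  have "quad_L (u + w) \<le> (\<Sum>j\<in>UNIV. L $ j * (2*(u $ j)^2 + 2*(w $ j)^2))" unfolding quad_L_def
  proof (intro sum_mono mult_left_mono L_nonneg)
    fix j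
    have "0 \<le> (u$j - w$j)^2" by simp
    thus "((u + w) $ j)^2 \<le> 2*(u $ j)^2 + 2*(w $ j)^2" by (simp add: power2_eq_square algebra_simps)
  qed
  also have "\<dots> = 2 * quad_L u + 2 * quad_L w"
    by (simp add: quad_L_def sum_distrib_left algebra_simps sum.distrib)
  finally show ?thesis .
qed

lemma quad_L_axis: "quad_L (axis i s) = L $ i * s^2"
proof -
  have "quad_L (axis i s) = (\<Sum>j\<in>UNIV. if j = i then L $ i * s^2 else 0)"
    unfolding quad_L_def by (intro sum.cong) (auto simp: axis_def)
  thus ?thesis by simp
qed

lemma taylor_remainder_le: "\<bar>f y - f x - g x \<bullet> (y - x)\<bar> \<le> (1/2) * quad_L (y - x)"
  using smooth[of y x] by (simp add: quad_L_def)

text \<open>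
  With \<open>h = s e\<^sub>i\<close> and \<open>E u v = f v - f u - g u \<bullet> (v - u)\<close>, the three-point identity
  \<open>(g x - g y) \<bullet> h = E y (y + h) - E x (y + h) + E x y\<close> bounds the \<open>i\<close>-th component of
  \<open>g x - g y\<close> by second-order remainders only.
\<close>
lemma gradient_component_lipschitz:
  "\<bar>g x $ i - g y $ i\<bar> \<le> (3/2) * (L $ i + l1 L) * norm (y - x)"
proof (cases "y = x")
  case False
  define d where "d = y - x"
  define s where "s = norm d"
  have s: "0 < s" using False by (simp add: s_def d_def)
  define h where "h = axis i s"
  define E where "E = (\<lambda>u v. f v - f u - g u \<bullet> (v - u))"
  have "s * \<bar>g x $ i - g y $ i\<bar> = \<bar>(g x - g y) \<bullet> h\<bar>"
    using s by (simp add: h_def inner_axis abs_mult mult.commute)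
  also have "\<dots> = \<bar>E y (y + h) - E x (y + h) + E x y\<bar>"
    by (rule arg_cong[where f=abs])
       (simp add: E_def inner_diff_left inner_diff_right inner_add_right algebra_simps)
  also have "\<dots> \<le> \<bar>E y (y + h)\<bar> + \<bar>E x (y + h)\<bar> + \<bar>E x y\<bar>" by linarith
  also have "\<dots> \<le> (1/2) * quad_L h + (1/2) * quad_L (d + h) + (1/2) * quad_L d"
    using taylor_remainder_le[of "y+h" y] taylor_remainder_le[of "y+h" x] taylor_remainder_le[of y x]
    by (simp add: E_def d_def algebra_simps)
  also have "\<dots> \<le> (3/2) * (L $ i * s^2 + quad_L d)"
    using quad_L_add_le[of d h] by (simp add: h_def quad_L_axis algebra_simps)
  also have "\<dots> \<le> (3/2) * (L $ i * s^2 + l1 L * s^2)" using quad_L_le[of d] by (simp add: s_def)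
  also have "\<dots> = s * ((3/2) * (L $ i + l1 L) * s)" by (simp add: power2_eq_square algebra_simps)
  finally have "\<bar>g x $ i - g y $ i\<bar> \<le> (3/2) * (L $ i + l1 L) * s"
    using s by (simp add: mult_le_cancel_left_pos)
  thus ?thesis by (simp add: s_def d_def)
qed simp

lemma gradient_lipschitz:
  "dist (g x) (g y) \<le> (3/2) * (l1 L + real CARD('d) * l1 L) * dist x y"
proof -
  have "dist (g x) (g y) \<le> (\<Sum>i\<in>UNIV. \<bar>(g x - g y) $ i\<bar>)" unfolding dist_norm by (rule norm_le_l1_cart)
  also have "\<dots> \<le> (\<Sum>i\<in>UNIV. (3/2) * (L $ i + l1 L) * norm (y - x))"
    using gradient_component_lipschitz[of x _ y] by (intro sum_mono) simp
  also have "\<dots> = (\<Sum>i\<in>UNIV. ((3/2) * norm (y - x)) * L $ i + (3/2) * norm (y - x) * l1 L)"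
    by (intro sum.cong) (auto simp: algebra_simps)
  also have "\<dots> = ((3/2)*norm(y-x)) * (\<Sum>i\<in>UNIV. L$i) + real CARD('d) * ((3/2)*norm(y-x)*l1 L)"
  proof -
    have "\<And>c k. (\<Sum>i\<in>(UNIV::'d set). c * L$i + k) = c * (\<Sum>i\<in>UNIV. L$i) + real CARD('d) * k"
      by (simp add: sum.distrib sum_distrib_left)
    thus ?thesis .
  qed
  also have "\<dots> = (3/2) * (l1 L + real CARD('d) * l1 L) * dist x y"
    by (simp add: l1_L_eq_sum[symmetric] dist_norm norm_minus_commute algebra_simps)
  finally show ?thesis .
qed

lemma continuous_on_f: "continuous_on UNIV f"
  using gradient by (intro continuous_at_imp_continuous_on ballI has_derivative_continuous) blast

lemma continuous_on_g: "continuous_on UNIV g"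
proof (rule lipschitz_on_continuous_on)
  show "((3/2) * (l1 L + real CARD('d) * l1 L))-lipschitz_on UNIV g"
    using gradient_lipschitz l1_nonneg[of L] by (intro lipschitz_onI) auto
qed

lemma sign_step_descent:
  assumes v: "\<And>i. \<bar>v $ i\<bar> \<le> 1" and \<delta>: "0 \<le> \<delta>"
  shows "f (x - \<delta> *\<^sub>R v) \<le> f x - \<delta> * (g x \<bullet> v) + \<delta>^2 / 2 * l1 L"
proof -
  let ?y = "x - \<delta> *\<^sub>R v"
  have "quad_L (?y - x) = (\<Sum>j\<in>UNIV. L $ j * (\<delta>^2 * (v $ j)^2))"
    by (simp add: quad_L_def power_mult_distrib)
  also have "\<dots> \<le> (\<Sum>j\<in>UNIV. L $ j * \<delta>^2)"
  proof (intro sum_mono mult_left_mono L_nonneg)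
    fix j
    have "(v $ j)^2 \<le> 1" using v[of j] by (simp add: abs_square_le_1)
    thus "\<delta>^2 * (v $ j)^2 \<le> \<delta>^2" using mult_left_mono[of "(v $ j)^2" 1 "\<delta>^2"] by simp
  qed
  also have "\<dots> = \<delta>^2 * l1 L" by (simp add: l1_L_eq_sum sum_distrib_right[symmetric] mult.commute)
  finally have "quad_L (?y - x) \<le> \<delta>^2 * l1 L" .
  moreover have "f ?y - f x - g x \<bullet> (?y - x) \<le> (1/2) * quad_L (?y - x)"
    using taylor_remainder_le[of ?y x] by linarith
  moreover have "g x \<bullet> (?y - x) = - \<delta> * (g x \<bullet> v)" by (simp add: inner_diff_right)
  ultimately show ?thesis by (simp add: algebra_simps)
qed

end

section \<open>Sign vectors and majority vote\<close>

lemma vsgn_nth [simp]: "vsgn v $ i = sgn (v $ i)"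
  by (simp add: vsgn_def)

lemma abs_vsgn_nth_le: "\<bar>vsgn v $ i\<bar> \<le> 1"
  by (simp add: abs_sgn_eq)

lemma norm_vsgn_le: "norm (vsgn (v :: real^'d)) \<le> real CARD('d)"
proof -
  have "norm (vsgn v) \<le> (\<Sum>i\<in>UNIV. \<bar>vsgn v $ i\<bar>)" by (rule norm_le_l1_cart)
  also have "\<dots> \<le> (\<Sum>i\<in>(UNIV::'d set). 1)" by (intro sum_mono abs_vsgn_nth_le)
  finally show ?thesis by simp
qed

lemma borel_measurable_vsgn:
  assumes "h \<in> borel_measurable N"
  shows "(\<lambda>z. vsgn (h z :: real^'d)) \<in> borel_measurable N"
proof -
  have "(\<lambda>z. sgn (h z $ i)) \<in> borel_measurable N" for i
    using measurable_compose[OF measurable_compose[OF assms borel_measurable_nth] borel_measurable_sgn]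
    by simp
  thus ?thesis unfolding vsgn_def by (intro borel_measurable_vec_lambda)
qed

lemma borel_measurable_minibatch:
  assumes G: "(\<lambda>(x, w). G x w) \<in> borel_measurable (borel \<Otimes>\<^sub>M P)"
    and x: "x \<in> borel_measurable N"
    and ws: "\<And>j. j < n \<Longrightarrow> (\<lambda>z. ws z j) \<in> N \<rightarrow>\<^sub>M P"
  shows "(\<lambda>z. minibatch G n (x z) (ws z) :: real^'d) \<in> borel_measurable N"
proof -
  have "(\<lambda>z. G (x z) (ws z j)) \<in> borel_measurable N" if "j < n" for j
    by (rule measurable_Pair_compose_split[OF G x ws[OF that]])
  thus ?thesis unfolding minibatch_def
    by (intro borel_measurable_scaleR borel_measurable_const borel_measurable_sum) auto
qed

lemma minibatch_cong:
  "(\<And>j. j < n \<Longrightarrow> ws j = ws' j) \<Longrightarrow> minibatch G n x ws = minibatch G n x ws'"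
  unfolding minibatch_def by (intro arg_cong[where f="\<lambda>s. _ *\<^sub>R s"] sum.cong) auto

lemma sgn_majority_vote_ge:
  fixes gm :: real and y :: "nat \<Rightarrow> real" and M :: nat
  defines "wrong \<equiv> (\<Sum>m<M. if gm * y m \<le> 0 then 1 else 0 :: real)"
  shows "\<bar>gm\<bar> - 2 * \<bar>gm\<bar> * (if real M \<le> 2 * wrong then 1 else 0) \<le> gm * sgn (\<Sum>m<M. sgn (y m))"
proof (cases "gm = 0")
  case False
  let ?S = "\<Sum>m<M. sgn (y m)"
  have "real M - 2 * wrong = (\<Sum>m<M. 1 - 2 * (if gm * y m \<le> 0 then 1 else 0 :: real))"
    by (simp add: wrong_def sum_subtractf sum_distrib_left)
  also have "\<dots> \<le> (\<Sum>m<M. sgn gm * sgn (y m))"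
  proof (rule sum_mono)
    fix m
    have "\<bar>sgn gm * sgn (y m)\<bar> \<le> 1" by (simp add: abs_mult abs_sgn_eq)
    moreover have "\<not> gm * y m \<le> 0 \<Longrightarrow> sgn gm * sgn (y m) = 1" by (simp add: sgn_mult[symmetric])
    ultimately show "1 - 2 * (if gm * y m \<le> 0 then 1 else 0 :: real) \<le> sgn gm * sgn (y m)"
      by (cases "gm * y m \<le> 0") auto
  qed
  also have "\<dots> = sgn gm * ?S" by (simp add: sum_distrib_left)
  finally have low: "real M - 2 * wrong \<le> sgn gm * ?S" .
  show ?thesis
  proof (cases "real M \<le> 2 * wrong")
    case True
    have "\<bar>gm * sgn ?S\<bar> \<le> \<bar>gm\<bar>" by (simp add: abs_mult abs_sgn_eq)
    thus ?thesis using True by auto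
  next
    case majority: False
    hence "0 < sgn gm * ?S" using low by linarith
    hence "sgn ?S = sgn gm"
      using False by (cases "gm > 0"; cases "?S > 0"; cases "?S = 0") (auto simp: sgn_if split: if_splits)
    hence "gm * sgn ?S = \<bar>gm\<bar>" by (simp add: abs_sgn)
    thus ?thesis using majority by simp
  qed
qed simp

lemma two_mul_cantelli_le:
  fixes a t :: real
  assumes a: "0 < a" and t: "0 \<le> t"
  shows "2 * a * (t^2 / (t^2 + a^2)) \<le> t"
proof -
  have "0 \<le> (t - a)^2" by simp
  hence "2 * a * t \<le> t^2 + a^2" by (simp add: power2_diff mult.commute mult.left_commute)
  hence "t * (2 * a * t) \<le> t * (t^2 + a^2)" using t by (intro mult_left_mono) auto
  moreover have "0 < t^2 + a^2" using a by (simp add: add_nonneg_pos)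
  ultimately show ?thesis by (simp add: pos_divide_le_eq power2_eq_square mult.commute mult.left_commute)
qed

lemma mult_square_div_le:
  fixes a u r t s :: real
  assumes u: "0 \<le> u" and s: "0 < s" and t: "0 \<le> t" and au: "a * u \<le> 2 * t * r"
    and denom: "0 < u^2 + s^2 * r^2"
  shows "a * u^2 / (u^2 + s^2 * r^2) \<le> t / s"
proof -
  have "a * u^2 * s = (a * u) * (u * s)" by (simp add: power2_eq_square)
  also have "\<dots> \<le> (2 * t * r) * (u * s)" using au u s by (intro mult_right_mono) auto
  also have "\<dots> = t * (2 * u * (s * r))" by simp
  also have "\<dots> \<le> t * (u^2 + (s*r)^2)"
  proof -
    have "0 \<le> (u - s*r)^2" by simp
    hence "2 * u * (s * r) \<le> u^2 + (s*r)^2" by (simp add: power2_diff)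
    thus ?thesis using t by (intro mult_left_mono) auto
  qed
  finally have le: "a * u^2 * s \<le> t * (u^2 + s^2 * r^2)" by (simp add: power_mult_distrib)
  have "a * u^2 / (u^2 + s^2 * r^2) = (a * u^2 * s) / ((u^2 + s^2 * r^2) * s)" using s by simp
  also have "\<dots> \<le> (t * (u^2 + s^2 * r^2)) / ((u^2 + s^2 * r^2) * s)"
    using le denom s by (intro divide_right_mono) auto
  also have "\<dots> = t / s" using denom by simp
  finally show ?thesis .
qed

lemma cantelli_majority_le:
  fixes a t q :: real and M :: nat
  assumes a: "0 < a" and q: "0 \<le> q" "2 * q < 1" and t: "0 \<le> t" and M: "1 \<le> M"
    and gauss: "a^2 * (1 - (1 - 2*q)^2) \<le> 4 * t^2 * (1 - 2*q)^2"
  shows "2 * a * ((real M * q * (1-q)) / (real M * q * (1-q) + (real M * (1-2*q)/2)^2))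
           \<le> 2 * t / sqrt (real M)"
proof -
  define r where "r = 1 - 2*q"
  have r: "0 < r" "r \<le> 1" using q by (auto simp: r_def)
  define u where "u = sqrt (1 - r^2)"
  define s where "s = sqrt (real M)"
  have "r^2 \<le> 1" using r by (intro power_le_one) auto
  hence u0: "0 \<le> u" and uu: "u^2 = 1 - r^2" by (simp_all add: u_def)
  have s0: "0 < s" using M by (simp add: s_def)
  have ss: "s^2 = real M" by (simp add: s_def)
  have "a^2 * (1 - r^2) \<le> 4 * t^2 * r^2" using gauss by (simp add: r_def)
  hence "(a * u)^2 \<le> (2 * t * r)^2" by (simp add: power_mult_distrib uu)
  moreover have "0 \<le> 2 * t * r" using t r by simp
  ultimately have au: "a * u \<le> 2 * t * r" by (rule power2_le_imp_le)
  have denom_pos: "0 < u^2 + real M * r^2" using r M by (simp add: add_nonneg_pos u0)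
  have "q * (1 - q) = u^2 / 4" unfolding uu r_def by (simp add: power2_eq_square algebra_simps)
  hence var: "real M * q * (1 - q) = real M * u^2 / 4" by (simp add: mult.assoc)
  have denom: "real M * u^2 / 4 + (real M * r / 2)^2 = real M * (u^2 + real M * r^2) / 4"
    by (simp add: power_mult_distrib power_divide algebra_simps power2_eq_square)
  have "(real M * u^2 / 4) / (real M * (u^2 + real M * r^2) / 4) = u^2 / (u^2 + real M * r^2)"
    using M by simp
  hence "2 * a * ((real M * u^2 / 4) / (real M * (u^2 + real M * r^2) / 4))
           = 2 * (a * u^2 / (u^2 + real M * r^2))"
    by simp
  also have "\<dots> \<le> 2 * t / s"
    using mult_square_div_le[OF u0 s0 t au, unfolded ss, OF denom_pos] by simp
  finally show ?thesis unfolding var r_def[symmetric] denom s_def .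
qed

lemma square_le_of_average_bound:
  fixes \<Lambda> D s E :: real and K :: nat
  assumes \<Lambda>: "0 < \<Lambda>" and K: "1 \<le> K" and D: "0 \<le> D" and s: "0 \<le> s" and E0: "0 \<le> E"
    and E: "E \<le> D / (real K * (1 / sqrt (\<Lambda> * real K))) + 2 * (s / sqrt (real K))
                 + 1 / sqrt (\<Lambda> * real K) * \<Lambda> / 2"
  shows "E^2 \<le> 1 / sqrt (real (K^2)) * (sqrt \<Lambda> * (D + 1/2) + 2 * s)^2"
proof -
  have sK: "0 < sqrt (real K)" using K by simp
  have sL: "0 < sqrt \<Lambda>" using \<Lambda> by simp
  have KK: "sqrt (real K) * sqrt (real K) = real K" using K by simp
  have LL: "sqrt \<Lambda> * sqrt \<Lambda> = \<Lambda>" using \<Lambda> by simp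
  have t1: "D / (real K * (1 / sqrt (\<Lambda> * real K))) = D * sqrt \<Lambda> / sqrt (real K)"
    using sK sL KK by (simp add: real_sqrt_mult field_simps)
  have t3: "1 / sqrt (\<Lambda> * real K) * \<Lambda> / 2 = sqrt \<Lambda> / (2 * sqrt (real K))"
    using \<Lambda> sK sL LL by (simp add: real_sqrt_mult field_simps)
  define U where "U = sqrt \<Lambda> * (D + 1/2) + 2 * s"
  have "E \<le> U / sqrt (real K)"
    using E unfolding t1 t3 U_def using sK by (simp add: field_simps)
  hence "E^2 \<le> (U / sqrt (real K))^2" using E0 by (intro power_mono) auto
  also have "\<dots> = 1 / sqrt (real (K^2)) * U^2" using K by (simp add: power_divide)
  finally show ?thesis by (simp add: U_def)
qed

section \<open>Distributed signSGD with majority vote\<close>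

locale signsgd = coordinatewise_smooth f g L
  for f :: "real^'d \<Rightarrow> real" and g and L +
  fixes fstar :: real and sigma :: "real^'d" and P :: "'w measure"
    and G :: "real^'d \<Rightarrow> 'w \<Rightarrow> real^'d" and Q :: "'a measure"
    and W :: "nat \<times> nat \<times> nat \<Rightarrow> 'a \<Rightarrow> 'w" and K M :: nat and x0 :: "real^'d"
  assumes f_ge_fstar: "\<And>x. f x \<ge> fstar"
    and P_prob: "prob_space P"
    and G_measurable: "(\<lambda>(x, w). G x w) \<in> borel_measurable (borel \<Otimes>\<^sub>M P)"
    and sigma_nonneg: "\<And>i. sigma $ i \<ge> 0"
    and G_integrable: "\<And>x i. integrable P (\<lambda>w. G x w $ i)"
    and G_mean: "\<And>x i. (\<integral>w. G x w $ i \<partial>P) = g x $ i"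
    and G_variance: "\<And>x i. (\<integral>\<^sup>+ w. ennreal ((G x w $ i - g x $ i)^2) \<partial>P) \<le> ennreal ((sigma $ i)^2)"
    and l1_L_pos: "l1 L > 0"
    and K_pos: "K \<ge> 1" and M_pos: "M \<ge> 1"
    and Q_prob: "prob_space Q"
    and W_indep: "prob_space.indep_vars Q (\<lambda>_. P) W ({..<K} \<times> {..<M} \<times> {..<K})"
    and W_distr: "\<And>t. t \<in> {..<K} \<times> {..<M} \<times> {..<K} \<Longrightarrow> distr Q P (W t) = P"

sublocale signsgd \<subseteq> Q: prob_space Q by (rule signsgd.Q_prob[OF signsgd_axioms])
sublocale signsgd \<subseteq> P: prob_space P by (rule signsgd.P_prob[OF signsgd_axioms])

context signsgd
begin

definition "stepsize = 1 / sqrt (l1 L * real K)"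
definition "Samples = {..<K} \<times> {..<M} \<times> {..<K}"
definition "samples_before k = {..<k} \<times> {..<M} \<times> {..<K}"
definition "samples_at k = {k} \<times> {..<M} \<times> {..<K}"
definition "vote k x ws = vsgn (\<Sum>m<M. vsgn (minibatch G K x (\<lambda>j. ws (k,m,j))))"
definition "iterate ws k = signsgd_mv G M (\<lambda>_. stepsize) (\<lambda>_. K) x0 ws k"
definition "X k \<omega> = iterate (\<lambda>t. W t \<omega>) k"

lemma stepsize_pos: "0 < stepsize"
  using l1_L_pos K_pos by (simp add: stepsize_def)

lemma iterate_0: "iterate ws 0 = x0"
  by (simp add: iterate_def)

lemma iterate_Suc: "iterate ws (Suc k) = iterate ws k - stepsize *\<^sub>R vote k (iterate ws k) ws"
  by (simp add: iterate_def vote_def Let_def)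

lemma vote_cong:
  assumes "\<And>m j. m < M \<Longrightarrow> j < K \<Longrightarrow> ws (k,m,j) = ws' (k,m,j)"
  shows "vote k x ws = vote k x ws'"
  unfolding vote_def using assms
  by (intro arg_cong[where f=vsgn] sum.cong refl arg_cong[where f=vsgn] minibatch_cong) auto

lemma iterate_cong:
  assumes "\<And>t. t \<in> samples_before k \<Longrightarrow> ws t = ws' t"
  shows "iterate ws k = iterate ws' k"
  using assms
proof (induction k)
  case (Suc k)
  have IH: "iterate ws k = iterate ws' k"
    using Suc.prems by (intro Suc.IH) (auto simp: samples_before_def)
  have "vote k (iterate ws k) ws = vote k (iterate ws k) ws'"
    using Suc.prems by (intro vote_cong) (auto simp: samples_before_def)
  thus ?case by (simp add: iterate_Suc IH)
qed (simp add: iterate_0)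

lemma abs_vote_nth_le: "\<bar>vote k x ws $ i\<bar> \<le> 1"
  unfolding vote_def by (rule abs_vsgn_nth_le)

lemma dist_sign_step_le: "dist x (x - stepsize *\<^sub>R vote k x ws) \<le> stepsize * real CARD('d)"
proof -
  have "dist x (x - stepsize *\<^sub>R vote k x ws) = stepsize * norm (vote k x ws)"
    using stepsize_pos by (simp add: dist_norm)
  also have "\<dots> \<le> stepsize * real CARD('d)"
    unfolding vote_def using stepsize_pos norm_vsgn_le by (intro mult_left_mono) auto
  finally show ?thesis .
qed

lemma dist_iterate_le: "dist x0 (iterate ws k) \<le> real k * (stepsize * real CARD('d))"
proof (induction k)
  case (Suc k)
  have "dist x0 (iterate ws (Suc k)) \<le> dist x0 (iterate ws k) + dist (iterate ws k) (iterate ws (Suc k))"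
    by (rule dist_triangle)
  also have "dist (iterate ws k) (iterate ws (Suc k)) \<le> stepsize * real CARD('d)"
    unfolding iterate_Suc by (rule dist_sign_step_le)
  finally show ?case using Suc.IH by (simp add: algebra_simps)
qed (simp add: iterate_0)

definition "radius = real K * (stepsize * real CARD('d)) + stepsize * real CARD('d)"

lemma iterate_in_cball:
  assumes k: "k \<le> K" shows "iterate ws k \<in> cball x0 radius"
proof -
  have step0: "0 \<le> stepsize * real CARD('d)" using stepsize_pos by simp
  have "real k * (stepsize * real CARD('d)) \<le> real K * (stepsize * real CARD('d))"
    using k step0 by (intro mult_right_mono) auto
  thus ?thesis using dist_iterate_le[of ws k] step0 unfolding radius_def mem_cball by linarith
qed

lemma sign_step_in_cball:
  assumes k: "k < K" shows "iterate ws k - stepsize *\<^sub>R vote k' (iterate ws k) ws' \<in> cball x0 radius"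
proof -
  let ?y = "iterate ws k"
  have "real k * (stepsize * real CARD('d)) \<le> real K * (stepsize * real CARD('d))"
    using k stepsize_pos by (intro mult_right_mono) auto
  thus ?thesis
    using dist_iterate_le[of ws k] dist_sign_step_le[of ?y k' ws']
      dist_triangle[of x0 "?y - stepsize *\<^sub>R vote k' ?y ws'" ?y]
    unfolding radius_def mem_cball by linarith
qed

lemma W_measurable: "t \<in> Samples \<Longrightarrow> W t \<in> Q \<rightarrow>\<^sub>M P"
  using W_indep unfolding Q.indep_vars_def Samples_def by auto

lemma in_Samples: "k < K \<Longrightarrow> m < M \<Longrightarrow> j < K \<Longrightarrow> (k,m,j) \<in> Samples"
  by (simp add: Samples_def)

lemma borel_measurable_vote:
  assumes x: "x \<in> borel_measurable N"
    and ws: "\<And>m j. m < M \<Longrightarrow> j < K \<Longrightarrow> (\<lambda>z. ws z (k,m,j)) \<in> N \<rightarrow>\<^sub>M P"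
  shows "(\<lambda>z. vote k (x z) (ws z)) \<in> borel_measurable N"
  unfolding vote_def
  by (intro borel_measurable_vsgn borel_measurable_sum borel_measurable_minibatch[OF G_measurable x])
     (use ws in auto)

lemma borel_measurable_iterate_PiM:
  assumes "samples_before k \<subseteq> J"
  shows "(\<lambda>ws. iterate ws k) \<in> borel_measurable (PiM J (\<lambda>_. P))"
  using assms
proof (induction k)
  case (Suc k)
  have IH: "(\<lambda>ws. iterate ws k) \<in> borel_measurable (PiM J (\<lambda>_. P))"
    using Suc.prems by (intro Suc.IH) (auto simp: samples_before_def)
  have "(\<lambda>ws. vote k (iterate ws k) ws) \<in> borel_measurable (PiM J (\<lambda>_. P))"
  proof (rule borel_measurable_vote[OF IH])
    fix m j assume "m < M" "j < K"
    hence "(k,m,j) \<in> J" using Suc.prems by (auto simp: samples_before_def)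
    thus "(\<lambda>z. z (k,m,j)) \<in> PiM J (\<lambda>_. P) \<rightarrow>\<^sub>M P" by (rule measurable_component_singleton)
  qed
  thus ?case unfolding iterate_Suc using IH by measurable
qed (simp add: iterate_0)

lemma restrict_W_measurable:
  "A \<subseteq> Samples \<Longrightarrow> (\<lambda>\<omega>. restrict (\<lambda>t. W t \<omega>) A) \<in> Q \<rightarrow>\<^sub>M PiM A (\<lambda>_. P)"
  by (intro measurable_restrict W_measurable) auto

lemma X_measurable:
  assumes k: "k \<le> K" shows "X k \<in> borel_measurable Q"
proof -
  have "samples_before k \<subseteq> Samples" using k by (auto simp: samples_before_def Samples_def)
  from measurable_compose[OF restrict_W_measurable[OF this] borel_measurable_iterate_PiM]
  have "(\<lambda>\<omega>. iterate (restrict (\<lambda>t. W t \<omega>) (samples_before k)) k) \<in> borel_measurable Q" by simp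
  moreover have "(\<lambda>\<omega>. iterate (restrict (\<lambda>t. W t \<omega>) (samples_before k)) k) = X k"
    unfolding X_def by (intro ext iterate_cong) auto
  ultimately show ?thesis by simp
qed

lemma borel_measurable_vote_W: "k < K \<Longrightarrow> (\<lambda>\<omega>. vote k x (\<lambda>t. W t \<omega>)) \<in> borel_measurable Q"
  by (intro borel_measurable_vote W_measurable in_Samples) auto

lemma integrable_vote_nth:
  assumes k: "k < K" shows "integrable Q (\<lambda>\<omega>. c * vote k x (\<lambda>t. W t \<omega>) $ i)"
proof (rule Q.integrable_const_bound[where B="\<bar>c\<bar>"])
  show "AE \<omega> in Q. norm (c * vote k x (\<lambda>t. W t \<omega>) $ i) \<le> \<bar>c\<bar>"
    by (intro AE_I2) (simp add: abs_mult mult_left_le abs_vote_nth_le)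
  from measurable_compose[OF borel_measurable_vote_W[OF k] borel_measurable_nth]
  show "(\<lambda>\<omega>. c * vote k x (\<lambda>t. W t \<omega>) $ i) \<in> borel_measurable Q" by simp
qed

lemma integrable_continuous_X:
  assumes h: "continuous_on UNIV (h :: real^'d \<Rightarrow> real)" and k: "k \<le> K"
  shows "integrable Q (\<lambda>\<omega>. h (X k \<omega>))"
proof -
  obtain B where B: "\<And>y. y \<in> cball x0 radius \<Longrightarrow> \<bar>h y\<bar> \<le> B"
    using continuous_bounded_on_cball[OF h] by blast
  show ?thesis
  proof (intro Q.integrable_const_bound[where B=B] AE_I2)
    show "(\<lambda>\<omega>. h (X k \<omega>)) \<in> borel_measurable Q"
      using measurable_compose[OF X_measurable[OF k] borel_measurable_continuous_onI[OF h]] .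
    fix \<omega> show "norm (h (X k \<omega>)) \<le> B"
      using B iterate_in_cball[OF k] by (simp add: X_def)
  qed
qed

lemma continuous_on_l1_g: "continuous_on UNIV (\<lambda>y. l1 (g y))"
  unfolding l1_def by (intro continuous_intros continuous_on_g)

end

subsection \<open>Noise of a single worker\<close>

context signsgd
begin

text \<open>Quantities of step \<open>k\<close> evaluated at a fixed point \<open>x\<close> in place of the iterate.\<close>
definition "sample_noise k x m j i \<omega> = G x (W (k,m,j) \<omega>) $ i - g x $ i"
definition "worker_grad k x m \<omega> = minibatch G K x (\<lambda>j. W (k,m,j) \<omega>)"
definition "worker_noise k x m i \<omega> = worker_grad k x m \<omega> $ i - g x $ i"
definition "wrong_sign k x m i \<omega> = (if g x $ i * worker_grad k x m \<omega> $ i \<le> 0 then 1 else 0 :: real)"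
definition "vote_fails k x i = {\<omega>\<in>space Q. real M \<le> 2 * (\<Sum>m<M. wrong_sign k x m i \<omega>)}"

lemma indep_var_W:
  assumes "t1 \<in> Samples" "t2 \<in> Samples" "t1 \<noteq> t2"
  shows "Q.indep_var P (W t1) P (W t2)"
proof -
  have "Q.indep_var (PiM {t1} (\<lambda>_. P)) (\<lambda>\<omega>. restrict (\<lambda>i. W i \<omega>) {t1})
                    (PiM {t2} (\<lambda>_. P)) (\<lambda>\<omega>. restrict (\<lambda>i. W i \<omega>) {t2})"
    using assms by (intro Q.indep_var_restrict[OF W_indep]) (auto simp: Samples_def)
  from Q.indep_var_compose[OF this measurable_component_singleton[of t1 "{t1}"]
      measurable_component_singleton[of t2 "{t2}"]]
  show ?thesis by (simp add: o_def)
qed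

lemma integral_W:
  assumes t: "t \<in> Samples" and h: "h \<in> borel_measurable P"
  shows "(\<integral>\<omega>. h (W t \<omega>) \<partial>Q) = (\<integral>w. (h w :: real) \<partial>P)"
  using integral_distr[OF W_measurable[OF t] h] W_distr[of t] t by (simp add: Samples_def)

lemma integrable_W_iff:
  assumes t: "t \<in> Samples" and h: "h \<in> borel_measurable P"
  shows "integrable Q (\<lambda>\<omega>. h (W t \<omega>) :: real) \<longleftrightarrow> integrable P h"
  using integrable_distr_eq[OF W_measurable[OF t] h] W_distr[of t] t by (simp add: Samples_def)

lemma G_noise_measurable: "(\<lambda>w. G x w $ i - g x $ i) \<in> borel_measurable P"
proof -
  have "(\<lambda>w. G x w) \<in> borel_measurable P"
    by (rule measurable_Pair_compose_split[OF G_measurable]) auto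
  from measurable_compose[OF this borel_measurable_nth] show ?thesis by measurable
qed

lemma G_noise_moments:
  shows "integrable P (\<lambda>w. G x w $ i - g x $ i)"
    and "(\<integral>w. G x w $ i - g x $ i \<partial>P) = 0"
    and "integrable P (\<lambda>w. (G x w $ i - g x $ i)^2)"
    and "(\<integral>w. (G x w $ i - g x $ i)^2 \<partial>P) \<le> (sigma $ i)^2"
proof -
  show "integrable P (\<lambda>w. G x w $ i - g x $ i)" using G_integrable[of x i] by simp
  show "(\<integral>w. G x w $ i - g x $ i \<partial>P) = 0"
    using G_integrable[of x i] G_mean[of x i] by (simp add: P.prob_space)
  have "(\<integral>\<^sup>+ w. ennreal ((G x w $ i - g x $ i)^2) \<partial>P) < \<infinity>"
    using G_variance[of x i] by (simp add: le_less_trans)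
  thus int2: "integrable P (\<lambda>w. (G x w $ i - g x $ i)^2)"
    using G_noise_measurable[of x i] by (intro integrableI_nonneg) auto
  have "ennreal (\<integral>w. (G x w $ i - g x $ i)^2 \<partial>P) = (\<integral>\<^sup>+ w. ennreal ((G x w $ i - g x $ i)^2) \<partial>P)"
    by (rule nn_integral_eq_integral[OF int2, symmetric]) auto
  also have "\<dots> \<le> ennreal ((sigma $ i)^2)" by (rule G_variance)
  finally show "(\<integral>w. (G x w $ i - g x $ i)^2 \<partial>P) \<le> (sigma $ i)^2" by (simp add: ennreal_le_iff)
qed

lemma sample_noise_moments:
  assumes "k < K" "m < M" "j < K"
  shows "integrable Q (sample_noise k x m j i)"
    and "(\<integral>\<omega>. sample_noise k x m j i \<omega> \<partial>Q) = 0"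
    and "integrable Q (\<lambda>\<omega>. (sample_noise k x m j i \<omega>)^2)"
    and "(\<integral>\<omega>. (sample_noise k x m j i \<omega>)^2 \<partial>Q) \<le> (sigma $ i)^2"
proof -
  have t: "(k,m,j) \<in> Samples" using assms by (rule in_Samples)
  have sq: "(\<lambda>w. (G x w $ i - g x $ i)^2) \<in> borel_measurable P"
    using G_noise_measurable[of x i] by measurable
  show "integrable Q (sample_noise k x m j i)"
    using integrable_W_iff[OF t G_noise_measurable] G_noise_moments(1)
    by (simp add: sample_noise_def[abs_def])
  show "(\<integral>\<omega>. sample_noise k x m j i \<omega> \<partial>Q) = 0"
    using integral_W[OF t G_noise_measurable] G_noise_moments(2)
    by (simp add: sample_noise_def[abs_def])
  show "integrable Q (\<lambda>\<omega>. (sample_noise k x m j i \<omega>)^2)"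
    using integrable_W_iff[OF t sq] G_noise_moments(3) by (simp add: sample_noise_def[abs_def])
  show "(\<integral>\<omega>. (sample_noise k x m j i \<omega>)^2 \<partial>Q) \<le> (sigma $ i)^2"
    using integral_W[OF t sq] G_noise_moments(4) by (simp add: sample_noise_def[abs_def])
qed

lemma sample_noise_indep:
  assumes "k < K" "m < M" "j < K" "j' < K" "j \<noteq> j'"
  shows "Q.indep_var borel (sample_noise k x m j i) borel (sample_noise k x m j' i)"
proof -
  have "Q.indep_var P (W (k,m,j)) P (W (k,m,j'))"
    using assms by (intro indep_var_W in_Samples) auto
  from Q.indep_var_compose[OF this G_noise_measurable G_noise_measurable]
  show ?thesis by (simp add: o_def sample_noise_def[abs_def])
qed

lemma worker_noise_eq_mean: "worker_noise k x m i \<omega> = (1 / real K) * (\<Sum>j<K. sample_noise k x m j i \<omega>)"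
proof -
  have "worker_noise k x m i \<omega> = (1 / real K) * (\<Sum>j<K. G x (W (k,m,j) \<omega>) $ i) - g x $ i"
    by (simp add: worker_noise_def worker_grad_def minibatch_def)
  also have "\<dots> = (1 / real K) * ((\<Sum>j<K. G x (W (k,m,j) \<omega>) $ i) - real K * g x $ i)"
    using K_pos by (simp add: field_simps)
  also have "(\<Sum>j<K. G x (W (k,m,j) \<omega>) $ i) - real K * g x $ i = (\<Sum>j<K. sample_noise k x m j i \<omega>)"
    by (simp add: sample_noise_def sum_subtractf)
  finally show ?thesis .
qed

lemma worker_noise_moments:
  assumes "k < K" "m < M"
  shows "integrable Q (worker_noise k x m i)"
    and "(\<integral>\<omega>. worker_noise k x m i \<omega> \<partial>Q) = 0"
    and "integrable Q (\<lambda>\<omega>. (worker_noise k x m i \<omega>)^2)"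
    and "(\<integral>\<omega>. (worker_noise k x m i \<omega>)^2 \<partial>Q) \<le> (sigma $ i)^2 / real K"
proof -
  have mean: "worker_noise k x m i = (\<lambda>\<omega>. (1 / real K) * (\<Sum>j<K. sample_noise k x m j i \<omega>))"
    by (simp add: fun_eq_iff worker_noise_eq_mean)
  note sample = sample_noise_moments[OF assms]
  show "integrable Q (worker_noise k x m i)" unfolding mean
    by (intro integrable_mult_right Bochner_Integration.integrable_sum sample(1)) auto
  show "(\<integral>\<omega>. worker_noise k x m i \<omega> \<partial>Q) = 0" unfolding mean using sample(1,2)
    by (simp add: Bochner_Integration.integral_sum)
  have sum: "integrable Q (\<lambda>\<omega>. (\<Sum>j\<in>{..<K}. sample_noise k x m j i \<omega>)^2)"
     "(\<integral>\<omega>. (\<Sum>j\<in>{..<K}. sample_noise k x m j i \<omega>)^2 \<partial>Q)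
        = (\<Sum>j\<in>{..<K}. \<integral>\<omega>. (sample_noise k x m j i \<omega>)^2 \<partial>Q)"
    using sample assms by (intro Q.integral_square_sum_indep sample_noise_indep; auto)+
  have sq: "(\<lambda>\<omega>. (worker_noise k x m i \<omega>)^2)
              = (\<lambda>\<omega>. (1 / real K)^2 * (\<Sum>j\<in>{..<K}. sample_noise k x m j i \<omega>)^2)"
    by (simp add: fun_eq_iff worker_noise_eq_mean power_divide)
  show "integrable Q (\<lambda>\<omega>. (worker_noise k x m i \<omega>)^2)" unfolding sq using sum(1) by auto
  have "(\<integral>\<omega>. (worker_noise k x m i \<omega>)^2 \<partial>Q)
          = (1 / real K)^2 * (\<Sum>j\<in>{..<K}. \<integral>\<omega>. (sample_noise k x m j i \<omega>)^2 \<partial>Q)"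
    unfolding sq using sum by simp
  also have "\<dots> \<le> (1 / real K)^2 * (\<Sum>j\<in>{..<K}. (sigma $ i)^2)"
    using sample(4) by (intro mult_left_mono sum_mono) auto
  also have "\<dots> = (sigma $ i)^2 / real K" using K_pos by (simp add: power2_eq_square)
  finally show "(\<integral>\<omega>. (worker_noise k x m i \<omega>)^2 \<partial>Q) \<le> (sigma $ i)^2 / real K" .
qed

lemma worker_grad_measurable: "k < K \<Longrightarrow> m < M \<Longrightarrow> worker_grad k x m \<in> borel_measurable Q"
  unfolding worker_grad_def[abs_def]
  by (intro borel_measurable_minibatch[OF G_measurable] W_measurable in_Samples) auto

lemma worker_grad_nth_measurable:
  "k < K \<Longrightarrow> m < M \<Longrightarrow> (\<lambda>\<omega>. worker_grad k x m \<omega> $ i) \<in> borel_measurable Q"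
  using measurable_compose[OF worker_grad_measurable borel_measurable_nth] by simp

lemma worker_noise_measurable: "k < K \<Longrightarrow> m < M \<Longrightarrow> worker_noise k x m i \<in> borel_measurable Q"
  unfolding worker_noise_def[abs_def]
  by (intro borel_measurable_diff worker_grad_nth_measurable borel_measurable_const)

lemma wrong_sign_measurable: "k < K \<Longrightarrow> m < M \<Longrightarrow> wrong_sign k x m i \<in> borel_measurable Q"
  using worker_grad_nth_measurable[of k m x i] unfolding wrong_sign_def[abs_def] by measurable

lemma integrable_wrong_sign: "k < K \<Longrightarrow> m < M \<Longrightarrow> integrable Q (wrong_sign k x m i)"
  using wrong_sign_measurable
  by (intro Q.integrable_const_bound[where B=1]) (auto simp: wrong_sign_def)

lemma integral_wrong_sign:
  "(\<integral>\<omega>. wrong_sign k x m i \<omega> \<partial>Q) = Q.prob {\<omega>\<in>space Q. g x $ i * worker_grad k x m \<omega> $ i \<le> 0}"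
proof -
  have "wrong_sign k x m i = indicator {\<omega>. g x $ i * worker_grad k x m \<omega> $ i \<le> 0}"
    by (simp add: fun_eq_iff wrong_sign_def indicator_def)
  hence "(\<integral>\<omega>. wrong_sign k x m i \<omega> \<partial>Q)
           = measure Q ({\<omega>. g x $ i * worker_grad k x m \<omega> $ i \<le> 0} \<inter> space Q)"
    by simp
  also have "{\<omega>. g x $ i * worker_grad k x m \<omega> $ i \<le> 0} \<inter> space Q
               = {\<omega>\<in>space Q. g x $ i * worker_grad k x m \<omega> $ i \<le> 0}" by auto
  finally show ?thesis .
qed

lemma vote_fails_in_sets:
  assumes k: "k < K" shows "vote_fails k x i \<in> sets Q"
proof -
  have "(\<lambda>\<omega>. \<Sum>m<M. wrong_sign k x m i \<omega>) \<in> borel_measurable Q"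
    using wrong_sign_measurable[OF k] by (intro borel_measurable_sum) auto
  thus ?thesis unfolding vote_fails_def by measurable
qed

lemma vote_nth_eq: "vote k x (\<lambda>t. W t \<omega>) $ i = sgn (\<Sum>m<M. sgn (worker_grad k x m \<omega> $ i))"
  by (simp add: vote_def worker_grad_def)

lemma prob_wrong_sign_le:
  assumes k: "k < K" and m: "m < M" and nonzero: "g x $ i \<noteq> 0"
  shows "Q.prob {\<omega>\<in>space Q. g x $ i * worker_grad k x m \<omega> $ i \<le> 0}
          \<le> ((sigma $ i)^2 / real K) / ((sigma $ i)^2 / real K + (g x $ i)^2)"
proof -
  let ?gi = "g x $ i"
  define Y where "Y = (\<lambda>\<omega>. - sgn ?gi * worker_noise k x m i \<omega>)"
  note noise = worker_noise_moments[OF k m, of x i]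
  have sgn_sq: "(sgn ?gi)^2 = 1" using nonzero by (simp add: sgn_if)
  have Y_sq: "(\<lambda>\<omega>. (Y \<omega>)^2) = (\<lambda>\<omega>. (worker_noise k x m i \<omega>)^2)"
    unfolding Y_def by (simp add: fun_eq_iff power_mult_distrib sgn_sq)
  have "?gi * worker_grad k x m \<omega> $ i \<le> 0 \<longleftrightarrow> \<bar>?gi\<bar> \<le> Y \<omega>" for \<omega>
  proof -
    have grad: "worker_grad k x m \<omega> $ i = ?gi + worker_noise k x m i \<omega>" by (simp add: worker_noise_def)
    show ?thesis
    proof (cases "?gi > 0")
      case True
      hence "?gi * (?gi + worker_noise k x m i \<omega>) \<le> 0 \<longleftrightarrow> ?gi + worker_noise k x m i \<omega> \<le> 0"
        by (auto simp: mult_le_0_iff)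
      thus ?thesis unfolding grad Y_def using True by auto
    next
      case False
      hence neg: "?gi < 0" using nonzero by simp
      hence "?gi * (?gi + worker_noise k x m i \<omega>) \<le> 0 \<longleftrightarrow> 0 \<le> ?gi + worker_noise k x m i \<omega>"
        by (auto simp: mult_le_0_iff)
      thus ?thesis unfolding grad Y_def using neg by auto
    qed
  qed
  hence "{\<omega>\<in>space Q. ?gi * worker_grad k x m \<omega> $ i \<le> 0} = {\<omega>\<in>space Q. \<bar>?gi\<bar> \<le> Y \<omega>}" by auto
  also have "Q.prob \<dots> \<le> ((sigma $ i)^2 / real K) / ((sigma $ i)^2 / real K + \<bar>?gi\<bar>^2)"
  proof (rule Q.cantelli_inequality)
    show "integrable Q Y" unfolding Y_def using noise(1) by auto
    show "integrable Q (\<lambda>\<omega>. (Y \<omega>)^2)" unfolding Y_sq by (rule noise(3))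
    show "(\<integral>\<omega>. Y \<omega> \<partial>Q) = 0" unfolding Y_def using noise(2) by simp
    show "(\<integral>\<omega>. (Y \<omega>)^2 \<partial>Q) \<le> (sigma $ i)^2 / real K" unfolding Y_sq by (rule noise(4))
  qed (use nonzero in simp)
  finally show ?thesis by simp
qed

lemma vote_correlation_ge:
  assumes k: "k < K"
  shows "\<bar>g x $ i\<bar> - 2 * \<bar>g x $ i\<bar> * Q.prob (vote_fails k x i)
           \<le> (\<integral>\<omega>. g x $ i * vote k x (\<lambda>t. W t \<omega>) $ i \<partial>Q)"
proof -
  let ?a = "\<bar>g x $ i\<bar>" and ?E = "vote_fails k x i"
  have E: "?E \<in> sets Q" by (rule vote_fails_in_sets[OF k])
  have pointwise: "?a - 2 * ?a * indicator ?E \<omega> \<le> g x $ i * vote k x (\<lambda>t. W t \<omega>) $ i"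
    if "\<omega> \<in> space Q" for \<omega>
    using sgn_majority_vote_ge[where gm="g x $ i" and y="\<lambda>m. worker_grad k x m \<omega> $ i" and M=M] that
    unfolding vote_nth_eq wrong_sign_def[symmetric]
    by (simp add: vote_fails_def indicator_def split: if_splits)
  have "?a - 2 * ?a * Q.prob ?E = (\<integral>\<omega>. ?a - 2 * ?a * indicator ?E \<omega> \<partial>Q)"
    using E by (simp add: Q.prob_space Bochner_Integration.integral_diff
        integrable_real_indicator Q.emeasure_eq_measure)
  also have "\<dots> \<le> (\<integral>\<omega>. g x $ i * vote k x (\<lambda>t. W t \<omega>) $ i \<partial>Q)"
    using E pointwise integrable_vote_nth[OF k]
    by (intro integral_mono_AE Bochner_Integration.integrable_diff Q.integrable_const
        integrable_mult_right integrable_real_indicator) (auto simp: Q.emeasure_eq_measure)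
  finally show ?thesis .
qed

subsection \<open>Part (a): Markov's inequality on the number of wrong workers\<close>

lemma prob_vote_fails_le_markov:
  assumes k: "k < K"
  shows "Q.prob (vote_fails k x i)
           \<le> 2 / real M * (\<Sum>m<M. Q.prob {\<omega>\<in>space Q. g x $ i * worker_grad k x m \<omega> $ i \<le> 0})"
proof -
  have int: "integrable Q (\<lambda>\<omega>. \<Sum>m<M. wrong_sign k x m i \<omega>)"
    using integrable_wrong_sign[OF k] by (intro Bochner_Integration.integrable_sum) auto
  have "vote_fails k x i = {\<omega>\<in>space Q. real M / 2 \<le> (\<Sum>m<M. wrong_sign k x m i \<omega>)}"
    by (auto simp: vote_fails_def)
  also have "Q.prob \<dots> \<le> (\<integral>\<omega>. (\<Sum>m<M. wrong_sign k x m i \<omega>) \<partial>Q) / (real M / 2)"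
  proof (rule integral_Markov_inequality_measure[OF int, where A="space Q"])
    show "AE \<omega> in Q. 0 \<le> (\<Sum>m<M. wrong_sign k x m i \<omega>)"
      by (intro AE_I2 sum_nonneg) (simp add: wrong_sign_def)
  qed (use M_pos in auto)
  also have "(\<integral>\<omega>. (\<Sum>m<M. wrong_sign k x m i \<omega>) \<partial>Q)
               = (\<Sum>m<M. Q.prob {\<omega>\<in>space Q. g x $ i * worker_grad k x m \<omega> $ i \<le> 0})"
    using integrable_wrong_sign[OF k] by (simp add: Bochner_Integration.integral_sum integral_wrong_sign)
  finally show ?thesis by (simp add: field_simps)
qed

lemma vote_correlation_ge_a:
  assumes k: "k < K"
  shows "\<bar>g x $ i\<bar> - 2 * (sigma $ i / sqrt (real K)) \<le> (\<integral>\<omega>. g x $ i * vote k x (\<lambda>t. W t \<omega>) $ i \<partial>Q)"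
proof (cases "g x $ i = 0")
  case True
  thus ?thesis using sigma_nonneg[of i] by simp
next
  case False
  let ?a = "\<bar>g x $ i\<bar>"
  define t where "t = sigma $ i / sqrt (real K)"
  have t0: "0 \<le> t" using sigma_nonneg[of i] by (simp add: t_def)
  have t2: "t^2 = (sigma $ i)^2 / real K" using K_pos by (simp add: t_def power_divide)
  have a0: "0 < ?a" using False by simp
  have "Q.prob (vote_fails k x i)
          \<le> 2 / real M * (\<Sum>m<M. Q.prob {\<omega>\<in>space Q. g x $ i * worker_grad k x m \<omega> $ i \<le> 0})"
    by (rule prob_vote_fails_le_markov[OF k])
  also have "\<dots> \<le> 2 / real M * (\<Sum>m<M. t^2 / (t^2 + ?a^2))"
    using prob_wrong_sign_le[OF k _ False] by (intro mult_left_mono sum_mono) (simp_all add: t2)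
  also have "\<dots> = 2 * (t^2 / (t^2 + ?a^2))" using M_pos by simp
  finally have "Q.prob (vote_fails k x i) \<le> 2 * (t^2 / (t^2 + ?a^2))" .
  hence "2 * ?a * Q.prob (vote_fails k x i) \<le> 2 * ?a * (2 * (t^2 / (t^2 + ?a^2)))"
    using a0 by (intro mult_left_mono) auto
  also have "\<dots> = 2 * (2 * ?a * (t^2 / (t^2 + ?a^2)))" by simp
  also have "\<dots> \<le> 2 * t" using two_mul_cantelli_le[OF a0 t0] by simp
  finally show ?thesis using vote_correlation_ge[OF k, of x i] by (simp add: t_def)
qed

subsection \<open>Part (b): Cantelli's inequality on the number of wrong workers\<close>

lemma worker_samples_indep:
  assumes "k < K" "m < M"
  shows "Q.indep_vars (\<lambda>_. P) (\<lambda>j. W (k,m,j)) {..<K}"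
proof -
  have "Q.indep_vars (\<lambda>j. PiM {(k,m,j)} (\<lambda>_. P)) (\<lambda>j \<omega>. restrict (\<lambda>i. W i \<omega>) {(k,m,j)}) {..<K}"
    using assms by (intro Q.indep_vars_restrict[OF W_indep]) (auto simp: disjoint_family_on_def)
  hence "Q.indep_vars (\<lambda>_. P) (\<lambda>j \<omega>. restrict (\<lambda>i. W i \<omega>) {(k,m,j)} (k,m,j)) {..<K}"
    by (rule Q.indep_vars_compose2) (rule measurable_component_singleton, simp)
  thus ?thesis by simp
qed

lemma distr_worker_samples:
  assumes "k < K" "m < M"
  shows "distr Q (PiM {..<K} (\<lambda>_. P)) (\<lambda>\<omega>. \<lambda>j\<in>{..<K}. W (k,m,j) \<omega>) = PiM {..<K} (\<lambda>_. P)"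
proof -
  have "0 \<in> {..<K}" using K_pos by simp
  hence ne: "{..<K} \<noteq> {}" by blast
  have "distr Q (PiM {..<K} (\<lambda>_. P)) (\<lambda>\<omega>. \<lambda>j\<in>{..<K}. W (k,m,j) \<omega>)
           = PiM {..<K} (\<lambda>j. distr Q P (W (k,m,j)))"
    using Q.indep_vars_iff_distr_eq_PiM'[OF ne, where M'="\<lambda>_. P" and X="\<lambda>j. W (k,m,j)"]
      worker_samples_indep[OF assms] W_measurable in_Samples assms by auto
  also have "\<dots> = PiM {..<K} (\<lambda>_. P)"
    using assms by (intro PiM_cong refl W_distr) auto
  finally show ?thesis .
qed

lemma distr_worker_noise:
  assumes "k < K" "m < M"
  shows "distr Q borel (worker_noise k x m i) = minibatch_noise_law G P g K x i"
proof -
  define h where "h = (\<lambda>ws. minibatch G K x ws $ i - g x $ i)"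
  define \<rho> where "\<rho> = (\<lambda>\<omega>. \<lambda>j\<in>{..<K}. W (k,m,j) \<omega>)"
  have "(\<lambda>ws. minibatch G K x ws) \<in> borel_measurable (PiM {..<K} (\<lambda>_. P))"
    by (rule borel_measurable_minibatch[OF G_measurable, where ws="\<lambda>z. z"])
       (auto intro: measurable_component_singleton)
  from measurable_compose[OF this borel_measurable_nth, of i]
  have h: "h \<in> borel_measurable (PiM {..<K} (\<lambda>_. P))" unfolding h_def by measurable
  have \<rho>: "\<rho> \<in> Q \<rightarrow>\<^sub>M PiM {..<K} (\<lambda>_. P)"
    unfolding \<rho>_def using assms by (intro measurable_restrict W_measurable in_Samples) auto
  have "worker_noise k x m i = h \<circ> \<rho>"
    by (auto simp: fun_eq_iff worker_noise_def worker_grad_def h_def \<rho>_def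
        intro!: arg_cong[where f="\<lambda>v. v $ i"] minibatch_cong)
  hence "distr Q borel (worker_noise k x m i) = distr (distr Q (PiM {..<K} (\<lambda>_. P)) \<rho>) borel h"
    using distr_distr[OF h \<rho>] by simp
  also have "distr Q (PiM {..<K} (\<lambda>_. P)) \<rho> = PiM {..<K} (\<lambda>_. P)"
    unfolding \<rho>_def by (rule distr_worker_samples[OF assms])
  finally show ?thesis by (simp add: minibatch_noise_law_def h_def)
qed

lemma prob_wrong_sign_eq_left_tail:
  assumes k: "k < K" and m: "m < M" and nonzero: "g x $ i \<noteq> 0"
    and law: "symmetric_unimodal (minibatch_noise_law G P g K x i)"
  shows "Q.prob {\<omega>\<in>space Q. g x $ i * worker_grad k x m \<omega> $ i \<le> 0}
           = measure (minibatch_noise_law G P g K x i) {..-\<bar>g x $ i\<bar>}"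
proof -
  let ?\<mu> = "minibatch_noise_law G P g K x i" and ?gi = "g x $ i"
  have measure_\<mu>: "measure ?\<mu> A = Q.prob (worker_noise k x m i -` A \<inter> space Q)" if "A \<in> sets borel" for A
    unfolding distr_worker_noise[OF k m, symmetric]
    by (rule measure_distr[OF worker_noise_measurable[OF k m] that])
  have grad: "worker_grad k x m \<omega> $ i = ?gi + worker_noise k x m i \<omega>" for \<omega>
    by (simp add: worker_noise_def)
  show ?thesis
  proof (cases "?gi > 0")
    case True
    have "{\<omega>\<in>space Q. ?gi * worker_grad k x m \<omega> $ i \<le> 0} = worker_noise k x m i -` {..-\<bar>?gi\<bar>} \<inter> space Q"
      unfolding grad using True by (auto simp: mult_le_0_iff)
    thus ?thesis using measure_\<mu>[of "{..-\<bar>?gi\<bar>}"] by simp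
  next
    case False
    hence "{\<omega>\<in>space Q. ?gi * worker_grad k x m \<omega> $ i \<le> 0} = worker_noise k x m i -` {\<bar>?gi\<bar>..} \<inter> space Q"
      unfolding grad using nonzero by (auto simp: mult_le_0_iff)
    hence "Q.prob {\<omega>\<in>space Q. ?gi * worker_grad k x m \<omega> $ i \<le> 0} = measure ?\<mu> {\<bar>?gi\<bar>..}"
      using measure_\<mu>[of "{\<bar>?gi\<bar>..}"] by simp
    also have "\<dots> = measure ?\<mu> {..-\<bar>?gi\<bar>}" by (rule symmetric_unimodal.prob_atLeast_eq[OF law])
    finally show ?thesis .
  qed
qed

lemma wrong_sign_indep:
  assumes k: "k < K" and m: "m < M" "m' < M" "m \<noteq> m'"
  shows "Q.indep_var borel (wrong_sign k x m i) borel (wrong_sign k x m' i)"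
proof -
  define A where "A = (\<lambda>m::nat. {k} \<times> {m} \<times> {..<K})"
  define h where "h = (\<lambda>(m::nat) (ws::nat\<times>nat\<times>nat \<Rightarrow> 'w).
                         if g x $ i * minibatch G K x (\<lambda>j. ws (k,m,j)) $ i \<le> 0 then 1 else (0::real))"
  have h: "h n \<in> borel_measurable (PiM (A n) (\<lambda>_. P))" for n
  proof -
    have "(\<lambda>ws. minibatch G K x (\<lambda>j. ws (k,n,j))) \<in> borel_measurable (PiM (A n) (\<lambda>_. P))"
      by (rule borel_measurable_minibatch[OF G_measurable])
         (auto simp: A_def intro: measurable_component_singleton)
    from measurable_compose[OF this borel_measurable_nth, of i]
    show ?thesis unfolding h_def by measurable
  qed
  have "Q.indep_var (PiM (A m) (\<lambda>_. P)) (\<lambda>\<omega>. restrict (\<lambda>t. W t \<omega>) (A m))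
                    (PiM (A m') (\<lambda>_. P)) (\<lambda>\<omega>. restrict (\<lambda>t. W t \<omega>) (A m'))"
    using assms by (intro Q.indep_var_restrict[OF W_indep]) (auto simp: A_def)
  from Q.indep_var_compose[OF this h h]
  have "Q.indep_var borel (h m \<circ> (\<lambda>\<omega>. restrict (\<lambda>t. W t \<omega>) (A m)))
                    borel (h m' \<circ> (\<lambda>\<omega>. restrict (\<lambda>t. W t \<omega>) (A m')))" .
  moreover have "h n \<circ> (\<lambda>\<omega>. restrict (\<lambda>t. W t \<omega>) (A n)) = wrong_sign k x n i" for n
  proof -
    have "minibatch G K x (\<lambda>j. restrict (\<lambda>t. W t \<omega>) (A n) (k,n,j)) = worker_grad k x n \<omega>" for \<omega>
      unfolding worker_grad_def by (intro minibatch_cong) (auto simp: A_def)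
    thus ?thesis by (simp add: fun_eq_iff h_def wrong_sign_def)
  qed
  ultimately show ?thesis by simp
qed

text \<open>The number of wrong workers is a sum of \<open>M\<close> independent Bernoulli(\<open>q\<close>) variables, and the
  vote fails only if it exceeds its mean \<open>M q\<close> by \<open>M (1 - 2q) / 2\<close>.\<close>
lemma prob_vote_fails_le_cantelli:
  assumes k: "k < K"
    and q: "\<And>m. m < M \<Longrightarrow> Q.prob {\<omega>\<in>space Q. g x $ i * worker_grad k x m \<omega> $ i \<le> 0} = q"
    and q_less: "2 * q < 1"
  shows "Q.prob (vote_fails k x i) \<le> (real M * q * (1-q)) / (real M * q * (1-q) + (real M * (1-2*q)/2)^2)"
proof -
  define Y where "Y = (\<lambda>m \<omega>. wrong_sign k x m i \<omega> - q)"
  have int: "m < M \<Longrightarrow> integrable Q (wrong_sign k x m i)" for m by (rule integrable_wrong_sign[OF k])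
  have mean: "m < M \<Longrightarrow> (\<integral>\<omega>. wrong_sign k x m i \<omega> \<partial>Q) = q" for m using integral_wrong_sign q by simp
  have Y_sq: "(Y m \<omega>)^2 = (1 - 2*q) * wrong_sign k x m i \<omega> + q^2" for m \<omega>
    unfolding Y_def wrong_sign_def by (simp add: power2_eq_square algebra_simps)
  have Y_int: "m < M \<Longrightarrow> integrable Q (Y m)" for m unfolding Y_def using int by auto
  have Y_indep: "m < M \<Longrightarrow> m' < M \<Longrightarrow> m \<noteq> m' \<Longrightarrow> Q.indep_var borel (Y m) borel (Y m')" for m m'
  proof -
    assume mm: "m < M" "m' < M" "m \<noteq> m'"
    have shift: "(\<lambda>v::real. v - q) \<in> borel_measurable borel" by measurable
    from Q.indep_var_compose[OF wrong_sign_indep[OF k mm] shift shift]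
    show ?thesis by (simp add: o_def Y_def[abs_def])
  qed
  have Y2_int: "m < M \<Longrightarrow> integrable Q (\<lambda>\<omega>. (Y m \<omega>)^2)" for m unfolding Y_sq using int by auto
  have Y_mean: "m < M \<Longrightarrow> (\<integral>\<omega>. Y m \<omega> \<partial>Q) = 0" for m
    unfolding Y_def using int mean by (simp add: Q.prob_space)
  have Y_var: "m < M \<Longrightarrow> (\<integral>\<omega>. (Y m \<omega>)^2 \<partial>Q) = q * (1 - q)" for m
    unfolding Y_sq using int mean by (simp add: Q.prob_space power2_eq_square algebra_simps)
  have sum: "integrable Q (\<lambda>\<omega>. (\<Sum>m\<in>{..<M}. Y m \<omega>)^2)"
     "(\<integral>\<omega>. (\<Sum>m\<in>{..<M}. Y m \<omega>)^2 \<partial>Q) = (\<Sum>m\<in>{..<M}. \<integral>\<omega>. (Y m \<omega>)^2 \<partial>Q)"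
    using Y_int Y2_int Y_mean Y_indep by (intro Q.integral_square_sum_indep; auto)+
  have "vote_fails k x i = {\<omega>\<in>space Q. real M * (1-2*q)/2 \<le> (\<Sum>m\<in>{..<M}. Y m \<omega>)}"
    by (auto simp: vote_fails_def Y_def sum_subtractf field_simps)
  also have "Q.prob \<dots> \<le> (real M * q * (1-q)) / (real M * q * (1-q) + (real M * (1-2*q)/2)^2)"
  proof (rule Q.cantelli_inequality[OF _ sum(1)])
    show "integrable Q (\<lambda>\<omega>. \<Sum>m\<in>{..<M}. Y m \<omega>)"
      using Y_int by (intro Bochner_Integration.integrable_sum) auto
    show "(\<integral>\<omega>. (\<Sum>m\<in>{..<M}. Y m \<omega>) \<partial>Q) = 0"
      using Y_int Y_mean by (simp add: Bochner_Integration.integral_sum)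
    show "(\<integral>\<omega>. (\<Sum>m\<in>{..<M}. Y m \<omega>)^2 \<partial>Q) \<le> real M * q * (1-q)"
      using sum(2) Y_var by simp
    show "0 < real M * (1-2*q)/2" using q_less M_pos by simp
  qed
  finally show ?thesis .
qed

lemma symmetric_unimodal_noise_law:
  assumes k: "k < K" and "unimodal (minibatch_noise_law G P g K x i)"
    and "symmetric0 (minibatch_noise_law G P g K x i)"
  shows "symmetric_unimodal (minibatch_noise_law G P g K x i)"
proof -
  have M0: "0 < M" using M_pos by simp
  have law: "minibatch_noise_law G P g K x i = distr Q borel (worker_noise k x 0 i)"
    using distr_worker_noise[OF k M0] by simp
  show ?thesis
  proof (intro symmetric_unimodal.intro symmetric_unimodal_axioms.intro)
    show "prob_space (minibatch_noise_law G P g K x i)"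
      unfolding law by (rule Q.prob_space_distr[OF worker_noise_measurable[OF k M0]])
    show "sets (minibatch_noise_law G P g K x i) = sets borel" unfolding law by simp
  qed fact+
qed

lemma gauss_inequality_noise_law:
  assumes k: "k < K" and law: "symmetric_unimodal (minibatch_noise_law G P g K x i)" and a: "0 < a"
  defines "q \<equiv> measure (minibatch_noise_law G P g K x i) {..-a}"
  shows "a^2 * (1 - (1 - 2*q)^2) \<le> 4 * ((sigma $ i)^2 / real K) * (1 - 2*q)^2"
proof -
  let ?\<mu> = "minibatch_noise_law G P g K x i"
  have M0: "0 < M" using M_pos by simp
  note noise = worker_noise_moments[OF k M0, of x i] and noise_measurable = worker_noise_measurable[OF k M0]
  have distr: "?\<mu> = distr Q borel (worker_noise k x 0 i)" using distr_worker_noise[OF k M0] by simp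
  have square: "(\<lambda>z::real. z^2) \<in> borel_measurable borel" by measurable
  show ?thesis unfolding q_def
  proof (rule symmetric_unimodal.gauss_inequality[OF law a])
    show "integrable ?\<mu> (\<lambda>z. z^2)"
      unfolding distr using integrable_distr_eq[OF noise_measurable square] noise(3) by simp
    show "(\<integral>z. z^2 \<partial>?\<mu>) \<le> (sigma $ i)^2 / real K"
      unfolding distr using integral_distr[OF noise_measurable square] noise(4) by simp
  qed
qed

lemma vote_correlation_ge_b:
  assumes k: "k < K" and unimodal: "unimodal (minibatch_noise_law G P g K x i)"
    and symmetric: "symmetric0 (minibatch_noise_law G P g K x i)"
  shows "\<bar>g x $ i\<bar> - 2 * (sigma $ i / sqrt (real K)) / sqrt (real M)
           \<le> (\<integral>\<omega>. g x $ i * vote k x (\<lambda>t. W t \<omega>) $ i \<partial>Q)"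
proof (cases "g x $ i = 0")
  case True
  thus ?thesis using sigma_nonneg[of i] by simp
next
  case False
  let ?\<mu> = "minibatch_noise_law G P g K x i" and ?a = "\<bar>g x $ i\<bar>"
  have a0: "0 < ?a" using False by simp
  have law: "symmetric_unimodal ?\<mu>" by (rule symmetric_unimodal_noise_law[OF k unimodal symmetric])
  define q where "q = measure ?\<mu> {..-?a}"
  define t where "t = sigma $ i / sqrt (real K)"
  have t0: "0 \<le> t" using sigma_nonneg[of i] by (simp add: t_def)
  have "t^2 = (sigma $ i)^2 / real K" using K_pos by (simp add: t_def power_divide)
  hence gauss: "?a^2 * (1 - (1 - 2*q)^2) \<le> 4 * t^2 * (1 - 2*q)^2"
    using gauss_inequality_noise_law[OF k law a0] by (simp add: q_def)
  have q0: "0 \<le> q" by (simp add: q_def)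
  have q_less: "2 * q < 1"
  proof (rule ccontr)
    assume "\<not> 2 * q < 1"
    hence "1 - 2*q = 0" using symmetric_unimodal.left_tail_le_half[OF law a0] by (simp add: q_def)
    thus False using gauss a0 by simp
  qed
  have "2 * ?a * Q.prob (vote_fails k x i)
          \<le> 2 * ?a * ((real M * q * (1-q)) / (real M * q * (1-q) + (real M * (1-2*q)/2)^2))"
    using a0 prob_wrong_sign_eq_left_tail[OF k _ False law]
    by (intro mult_left_mono prob_vote_fails_le_cantelli[OF k _ q_less]) (auto simp: q_def)
  also have "\<dots> \<le> 2 * t / sqrt (real M)"
    by (rule cantelli_majority_le[OF a0 q0 q_less t0 M_pos gauss])
  finally show ?thesis using vote_correlation_ge[OF k, of x i] by (simp add: t_def)
qed

subsection \<open>Descent in expectation\<close>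

definition "expected_next k x = (\<integral>\<omega>. f (x - stepsize *\<^sub>R vote k x (\<lambda>t. W t \<omega>)) \<partial>Q)"

lemma f_measurable: "f \<in> borel_measurable borel"
  by (rule borel_measurable_continuous_onI[OF continuous_on_f])

lemma integrable_f_sign_step:
  assumes k: "k < K" shows "integrable Q (\<lambda>\<omega>. f (x - stepsize *\<^sub>R vote k x (\<lambda>t. W t \<omega>)))"
proof -
  obtain B where B: "\<And>y. y \<in> cball x (stepsize * real CARD('d)) \<Longrightarrow> \<bar>f y\<bar> \<le> B"
    using continuous_bounded_on_cball[OF continuous_on_f] by blast
  show ?thesis
  proof (rule Q.integrable_const_bound[where B=B])
    have "x - stepsize *\<^sub>R vote k x ws \<in> cball x (stepsize * real CARD('d))" for ws
      using dist_sign_step_le[of x k ws] by simp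
    thus "AE \<omega> in Q. norm (f (x - stepsize *\<^sub>R vote k x (\<lambda>t. W t \<omega>))) \<le> B"
      using B by (intro AE_I2) simp
    show "(\<lambda>\<omega>. f (x - stepsize *\<^sub>R vote k x (\<lambda>t. W t \<omega>))) \<in> borel_measurable Q"
      using measurable_compose[OF _ f_measurable] borel_measurable_vote_W[OF k] by measurable
  qed
qed

lemma borel_measurable_expected_next:
  assumes k: "k < K" shows "expected_next k \<in> borel_measurable borel"
proof -
  have "(\<lambda>z. vote k (fst z) (\<lambda>t. W t (snd z))) \<in> borel_measurable (borel \<Otimes>\<^sub>M Q)"
  proof (rule borel_measurable_vote[OF measurable_fst])
    fix m j assume "m < M" "j < K"
    with k show "(\<lambda>z. W (k,m,j) (snd z)) \<in> borel \<Otimes>\<^sub>M Q \<rightarrow>\<^sub>M P"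
      by (intro measurable_compose[OF measurable_snd W_measurable] in_Samples)
  qed
  hence "(\<lambda>z. fst z - stepsize *\<^sub>R vote k (fst z) (\<lambda>t. W t (snd z))) \<in> borel_measurable (borel \<Otimes>\<^sub>M Q)"
    by (intro borel_measurable_diff borel_measurable_scaleR borel_measurable_const measurable_fst)
  from measurable_compose[OF this f_measurable]
  show ?thesis unfolding expected_next_def[abs_def]
    by (intro Q.borel_measurable_lebesgue_integral) (simp add: case_prod_beta')
qed

lemma expected_next_le:
  assumes k: "k < K"
    and vote_ge: "\<And>i. \<bar>g x $ i\<bar> - 2 * b i \<le> (\<integral>\<omega>. g x $ i * vote k x (\<lambda>t. W t \<omega>) $ i \<partial>Q)"
  shows "expected_next k x \<le> f x - stepsize * (l1 (g x) - 2 * (\<Sum>i\<in>UNIV. b i)) + stepsize^2 / 2 * l1 L"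
proof -
  let ?V = "\<lambda>\<omega>. vote k x (\<lambda>t. W t \<omega>)"
  have sum_int: "integrable Q (\<lambda>\<omega>. \<Sum>i\<in>UNIV. g x $ i * ?V \<omega> $ i)"
    using integrable_vote_nth[OF k] by (intro Bochner_Integration.integrable_sum) auto
  have descent: "f (x - stepsize *\<^sub>R ?V \<omega>) \<le> f x - stepsize * (\<Sum>i\<in>UNIV. g x $ i * ?V \<omega> $ i) + stepsize^2 / 2 * l1 L"
    for \<omega>
  proof -
    have "f (x - stepsize *\<^sub>R ?V \<omega>) \<le> f x - stepsize * (g x \<bullet> ?V \<omega>) + stepsize^2 / 2 * l1 L"
      using stepsize_pos abs_vote_nth_le by (intro sign_step_descent) auto
    thus ?thesis by (simp add: inner_vec_def)
  qed
  have "expected_next k x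
          \<le> (\<integral>\<omega>. f x - stepsize * (\<Sum>i\<in>UNIV. g x $ i * ?V \<omega> $ i) + stepsize^2 / 2 * l1 L \<partial>Q)"
    unfolding expected_next_def using integrable_f_sign_step[OF k] sum_int descent
    by (intro integral_mono) auto
  also have "\<dots> = f x - stepsize * (\<Sum>i\<in>UNIV. \<integral>\<omega>. g x $ i * ?V \<omega> $ i \<partial>Q) + stepsize^2 / 2 * l1 L"
    using sum_int integrable_vote_nth[OF k] by (simp add: Q.prob_space Bochner_Integration.integral_sum)
  also have "\<dots> \<le> f x - stepsize * (\<Sum>i\<in>UNIV. \<bar>g x $ i\<bar> - 2 * b i) + stepsize^2 / 2 * l1 L"
  proof -
    have "(\<Sum>i\<in>UNIV. \<bar>g x $ i\<bar> - 2 * b i) \<le> (\<Sum>i\<in>UNIV. \<integral>\<omega>. g x $ i * ?V \<omega> $ i \<partial>Q)"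
      by (intro sum_mono vote_ge)
    thus ?thesis using stepsize_pos by (simp add: mult_left_mono)
  qed
  also have "(\<Sum>i\<in>UNIV. \<bar>g x $ i\<bar> - 2 * b i) = l1 (g x) - 2 * (\<Sum>i\<in>UNIV. b i)"
    by (simp add: l1_def sum_subtractf sum_distrib_left)
  finally show ?thesis .
qed

lemma abs_expected_next_le:
  assumes k: "k < K" and bound: "\<And>ws. \<bar>f (y - stepsize *\<^sub>R vote k y ws)\<bar> \<le> C"
  shows "\<bar>expected_next k y\<bar> \<le> C"
proof -
  have "expected_next k y \<le> C" unfolding expected_next_def
    using bound by (intro Q.integral_le_const integrable_f_sign_step[OF k] AE_I2) (simp add: abs_le_iff)
  moreover have "- C \<le> f (y - stepsize *\<^sub>R vote k y ws)" for ws
    using bound[of ws] unfolding abs_le_iff by linarith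
  hence "- C \<le> expected_next k y" unfolding expected_next_def
    by (intro Q.integral_ge_const integrable_f_sign_step[OF k] AE_I2)
  ultimately show ?thesis by simp
qed

lemma integrable_expected_next_X:
  assumes k: "k < K" shows "integrable Q (\<lambda>\<omega>. expected_next k (X k \<omega>))"
proof -
  obtain C where C: "\<And>y. y \<in> cball x0 radius \<Longrightarrow> \<bar>f y\<bar> \<le> C"
    using continuous_bounded_on_cball[OF continuous_on_f] by blast
  show ?thesis
  proof (rule Q.integrable_const_bound[where B=C])
    show "(\<lambda>\<omega>. expected_next k (X k \<omega>)) \<in> borel_measurable Q"
      using measurable_compose[OF X_measurable borel_measurable_expected_next[OF k]] k by simp
    show "AE \<omega> in Q. norm (expected_next k (X k \<omega>)) \<le> C"
      using abs_expected_next_le[OF k C[OF sign_step_in_cball[OF k]]] by (simp add: X_def)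
  qed
qed

lemma borel_measurable_sign_step_PiM:
  "(\<lambda>(a, b). f (iterate a k - stepsize *\<^sub>R vote k (iterate a k) b))
     \<in> borel_measurable (PiM (samples_before k) (\<lambda>_. P) \<Otimes>\<^sub>M PiM (samples_at k) (\<lambda>_. P))"
  (is "_ \<in> borel_measurable (?N1 \<Otimes>\<^sub>M ?N2)")
proof -
  have iterate: "(\<lambda>z. iterate (fst z) k) \<in> borel_measurable (?N1 \<Otimes>\<^sub>M ?N2)"
    by (rule measurable_compose[OF measurable_fst borel_measurable_iterate_PiM]) simp
  have "(\<lambda>z. vote k (iterate (fst z) k) (snd z)) \<in> borel_measurable (?N1 \<Otimes>\<^sub>M ?N2)"
  proof (rule borel_measurable_vote[OF iterate])
    fix m j assume "m < M" "j < K"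
    hence "(k,m,j) \<in> samples_at k" by (simp add: samples_at_def)
    hence "(\<lambda>b. b (k,m,j)) \<in> ?N2 \<rightarrow>\<^sub>M P" by (rule measurable_component_singleton)
    thus "(\<lambda>z. snd z (k,m,j)) \<in> ?N1 \<Otimes>\<^sub>M ?N2 \<rightarrow>\<^sub>M P" by (rule measurable_compose[OF measurable_snd])
  qed
  with iterate have "(\<lambda>z. iterate (fst z) k - stepsize *\<^sub>R vote k (iterate (fst z) k) (snd z))
                       \<in> borel_measurable (?N1 \<Otimes>\<^sub>M ?N2)" by measurable
  from measurable_compose[OF this f_measurable] show ?thesis by (simp add: case_prod_beta')
qed

text \<open>The samples of step \<open>k\<close> are independent of those that determine \<open>X k\<close>, so the expectation
  over them may be taken with \<open>X k\<close> frozen.\<close>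
lemma integral_f_X_Suc:
  assumes k: "k < K"
  shows "(\<integral>\<omega>. f (X (Suc k) \<omega>) \<partial>Q) = (\<integral>\<omega>. expected_next k (X k \<omega>) \<partial>Q)"
proof -
  obtain C where C: "\<And>y. y \<in> cball x0 radius \<Longrightarrow> \<bar>f y\<bar> \<le> C"
    using continuous_bounded_on_cball[OF continuous_on_f] by blast
  define F where "F = (\<lambda>a b. f (iterate a k - stepsize *\<^sub>R vote k (iterate a k) b))"
  define A where "A = (\<lambda>\<omega>. restrict (\<lambda>t. W t \<omega>) (samples_before k))"
  define B where "B = (\<lambda>\<omega>. restrict (\<lambda>t. W t \<omega>) (samples_at k))"
  have indep: "Q.indep_var (PiM (samples_before k) (\<lambda>_. P)) A (PiM (samples_at k) (\<lambda>_. P)) B"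
    unfolding A_def B_def using k
    by (intro Q.indep_var_restrict[OF W_indep]) (auto simp: samples_before_def samples_at_def)
  have XA: "iterate (A \<omega>) k = X k \<omega>" for \<omega>
    unfolding A_def X_def by (intro iterate_cong) auto
  have VB: "vote k y (B \<omega>) = vote k y (\<lambda>t. W t \<omega>)" for y \<omega>
    unfolding B_def by (intro vote_cong) (auto simp: samples_at_def)
  have F_AB: "F (A \<omega>) (B \<omega>) = f (X (Suc k) \<omega>)" for \<omega>
    by (simp add: F_def XA VB X_def iterate_Suc)
  have F_frozen: "(\<integral>\<omega>'. F (A \<omega>) (B \<omega>') \<partial>Q) = expected_next k (X k \<omega>)" for \<omega>
    by (simp add: F_def XA VB expected_next_def)
  have F_bounded: "\<bar>F a b\<bar> \<le> C" for a b
    unfolding F_def by (rule C[OF sign_step_in_cball[OF k]])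
  have F_measurable: "(\<lambda>(a, b). F a b) \<in> borel_measurable (PiM (samples_before k) (\<lambda>_. P) \<Otimes>\<^sub>M PiM (samples_at k) (\<lambda>_. P))"
    unfolding F_def by (rule borel_measurable_sign_step_PiM)
  show ?thesis
    using Q.integral_indep_var_eq_iterated[OF indep F_measurable F_bounded] by (simp add: F_AB F_frozen)
qed

lemma integrable_f_X: "k \<le> K \<Longrightarrow> integrable Q (\<lambda>\<omega>. f (X k \<omega>))"
  by (rule integrable_continuous_X[OF continuous_on_f])

lemma integrable_l1_g_X: "k \<le> K \<Longrightarrow> integrable Q (\<lambda>\<omega>. l1 (g (X k \<omega>)))"
  by (rule integrable_continuous_X[OF continuous_on_l1_g])

lemma telescoping_bound:
  assumes step: "\<And>k. k < K \<Longrightarrow> AE \<omega> in Q. expected_next k (X k \<omega>) \<le> f (X k \<omega>) - stepsize * l1 (g (X k \<omega>)) + C"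
  shows "stepsize * (\<Sum>k<K. \<integral>\<omega>. l1 (g (X k \<omega>)) \<partial>Q) \<le> f x0 - fstar + real K * C"
proof -
  have descent: "(\<integral>\<omega>. f (X (Suc k) \<omega>) \<partial>Q)
                   \<le> (\<integral>\<omega>. f (X k \<omega>) \<partial>Q) - stepsize * (\<integral>\<omega>. l1 (g (X k \<omega>)) \<partial>Q) + C"
    if k: "k < K" for k
  proof -
    have "(\<integral>\<omega>. f (X (Suc k) \<omega>) \<partial>Q) = (\<integral>\<omega>. expected_next k (X k \<omega>) \<partial>Q)"
      by (rule integral_f_X_Suc[OF k])
    also have "\<dots> \<le> (\<integral>\<omega>. f (X k \<omega>) - stepsize * l1 (g (X k \<omega>)) + C \<partial>Q)"
      using integrable_expected_next_X[OF k] integrable_f_X[of k] integrable_l1_g_X[of k] k step[OF k]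
      by (intro integral_mono_AE) auto
    also have "\<dots> = (\<integral>\<omega>. f (X k \<omega>) \<partial>Q) - stepsize * (\<integral>\<omega>. l1 (g (X k \<omega>)) \<partial>Q) + C"
      using integrable_f_X[of k] integrable_l1_g_X[of k] k by (simp add: Q.prob_space)
    finally show ?thesis .
  qed
  have partial: "stepsize * (\<Sum>k<n. \<integral>\<omega>. l1 (g (X k \<omega>)) \<partial>Q) \<le> f x0 - (\<integral>\<omega>. f (X n \<omega>) \<partial>Q) + real n * C"
    if "n \<le> K" for n
    using that
  proof (induction n)
    case 0 thus ?case by (simp add: X_def iterate_0 Q.prob_space)
  next
    case (Suc n)
    hence n: "n < K" by simp
    have "stepsize * (\<Sum>k<Suc n. \<integral>\<omega>. l1 (g (X k \<omega>)) \<partial>Q)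
            = stepsize * (\<Sum>k<n. \<integral>\<omega>. l1 (g (X k \<omega>)) \<partial>Q) + stepsize * (\<integral>\<omega>. l1 (g (X n \<omega>)) \<partial>Q)"
      by (simp add: algebra_simps)
    also have "\<dots> \<le> f x0 - (\<integral>\<omega>. f (X n \<omega>) \<partial>Q) + real n * C + stepsize * (\<integral>\<omega>. l1 (g (X n \<omega>)) \<partial>Q)"
      using Suc.IH n by simp
    also have "\<dots> \<le> f x0 - (\<integral>\<omega>. f (X (Suc n) \<omega>) \<partial>Q) + real (Suc n) * C"
      using descent[OF n] by (simp add: algebra_simps)
    finally show ?case .
  qed
  have "(\<integral>\<omega>. fstar \<partial>Q) \<le> (\<integral>\<omega>. f (X K \<omega>) \<partial>Q)"
    using integrable_f_X[of K] f_ge_fstar by (intro integral_mono) auto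
  thus ?thesis using partial[of K] by (simp add: Q.prob_space)
qed

lemma integral_average_gradient:
  "(\<integral>\<omega>. (1 / real K) * (\<Sum>k<K. l1 (g (X k \<omega>))) \<partial>Q) = (1 / real K) * (\<Sum>k<K. \<integral>\<omega>. l1 (g (X k \<omega>)) \<partial>Q)"
  using integrable_l1_g_X by (simp add: Bochner_Integration.integral_sum)

lemma integrable_average_gradient: "integrable Q (\<lambda>\<omega>. (1 / real K) * (\<Sum>k<K. l1 (g (X k \<omega>))))"
  using integrable_l1_g_X by (intro integrable_mult_right Bochner_Integration.integrable_sum) auto

text \<open>The common final estimate of (a) and (b); they differ in the factor \<open>\<rho>\<close> (\<open>1\<close>, resp.
  \<open>1/\<surd>M\<close>) in the per-coordinate bound and in the event \<open>Pr\<close> on which that bound is available.\<close>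
lemma average_gradient_squared_le:
  assumes \<rho>: "0 \<le> \<rho>"
    and vote_ge: "\<And>k x i. k < K \<Longrightarrow> Pr k x \<Longrightarrow>
        \<bar>g x $ i\<bar> - 2 * (\<rho> * sigma $ i / sqrt (real K)) \<le> (\<integral>\<omega>. g x $ i * vote k x (\<lambda>t. W t \<omega>) $ i \<partial>Q)"
    and Pr: "\<And>k. k < K \<Longrightarrow> AE \<omega> in Q. Pr k (X k \<omega>)"
  shows "(\<integral>\<omega>. (1 / real K) * (\<Sum>k<K. l1 (g (X k \<omega>))) \<partial>Q)^2
           \<le> 1 / sqrt (real (K^2)) * (sqrt (l1 L) * (f x0 - fstar + 1/2) + 2 * (\<rho> * l1 sigma))^2"
proof (rule square_le_of_average_bound[OF l1_L_pos K_pos])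
  define C where "C = 2 * stepsize * (\<rho> * l1 sigma / sqrt (real K)) + stepsize^2 / 2 * l1 L"
  have sum_sigma: "(\<Sum>i\<in>UNIV. \<rho> * sigma $ i / sqrt (real K)) = \<rho> * l1 sigma / sqrt (real K)"
    by (simp add: l1_def abs_of_nonneg[OF sigma_nonneg] sum_divide_distrib sum_distrib_left)
  have "AE \<omega> in Q. expected_next k (X k \<omega>) \<le> f (X k \<omega>) - stepsize * l1 (g (X k \<omega>)) + C"
    if k: "k < K" for k
    using Pr[OF k]
  proof (rule AE_mp, intro AE_I2 impI)
    fix \<omega> assume "Pr k (X k \<omega>)"
    from expected_next_le[OF k vote_ge[OF k this]]
    show "expected_next k (X k \<omega>) \<le> f (X k \<omega>) - stepsize * l1 (g (X k \<omega>)) + C"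
      by (simp add: sum_sigma C_def algebra_simps)
  qed
  hence "stepsize * (\<Sum>k<K. \<integral>\<omega>. l1 (g (X k \<omega>)) \<partial>Q) \<le> f x0 - fstar + real K * C"
    by (rule telescoping_bound)
  hence "(1 / real K) * (\<Sum>k<K. \<integral>\<omega>. l1 (g (X k \<omega>)) \<partial>Q) \<le> (f x0 - fstar + real K * C) / (real K * stepsize)"
    using stepsize_pos K_pos by (simp add: field_simps)
  also have "\<dots> = (f x0 - fstar) / (real K * stepsize) + 2 * (\<rho> * l1 sigma / sqrt (real K))
                     + stepsize * l1 L / 2"
    using stepsize_pos K_pos by (simp add: C_def field_simps power2_eq_square)
  finally show "(\<integral>\<omega>. (1 / real K) * (\<Sum>k<K. l1 (g (X k \<omega>))) \<partial>Q)
     \<le> (f x0 - fstar) / (real K * (1 / sqrt (l1 L * real K))) + 2 * (\<rho> * l1 sigma / sqrt (real K))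
        + 1 / sqrt (l1 L * real K) * l1 L / 2"
    unfolding integral_average_gradient by (simp add: stepsize_def)
  show "0 \<le> f x0 - fstar" using f_ge_fstar[of x0] by simp
  show "0 \<le> \<rho> * l1 sigma" using \<rho> l1_nonneg[of sigma] by simp
  show "0 \<le> (\<integral>\<omega>. (1 / real K) * (\<Sum>k<K. l1 (g (X k \<omega>))) \<partial>Q)"
    by (intro integral_nonneg_AE AE_I2 mult_nonneg_nonneg sum_nonneg l1_nonneg) auto
qed

lemma average_gradient_squared_le_a:
  "(\<integral>\<omega>. (1 / real K) * (\<Sum>k<K. l1 (g (X k \<omega>))) \<partial>Q)^2
     \<le> 1 / sqrt (real (K^2)) * (sqrt (l1 L) * (f x0 - fstar + 1/2) + 2 * l1 sigma)^2"
  using average_gradient_squared_le[where \<rho>=1 and Pr="\<lambda>_ _. True"] vote_correlation_ge_a by simp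

lemma average_gradient_squared_le_b:
  assumes "\<forall>k<K. AE \<omega> in Q. \<forall>i. unimodal (minibatch_noise_law G P g K (X k \<omega>) i)
                                \<and> symmetric0 (minibatch_noise_law G P g K (X k \<omega>) i)"
  shows "(\<integral>\<omega>. (1 / real K) * (\<Sum>k<K. l1 (g (X k \<omega>))) \<partial>Q)^2
           \<le> 1 / sqrt (real (K^2)) * (sqrt (l1 L) * (f x0 - fstar + 1/2) + 2 / sqrt (real M) * l1 sigma)^2"
proof -
  have "(\<integral>\<omega>. (1 / real K) * (\<Sum>k<K. l1 (g (X k \<omega>))) \<partial>Q)^2
          \<le> 1 / sqrt (real (K^2)) * (sqrt (l1 L) * (f x0 - fstar + 1/2) + 2 * (1 / sqrt (real M) * l1 sigma))^2"
  proof (rule average_gradient_squared_le[where Pr="\<lambda>k x. \<forall>i. unimodal (minibatch_noise_law G P g K x i)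
                                                    \<and> symmetric0 (minibatch_noise_law G P g K x i)"])
    fix k x i assume "k < K" "\<forall>i. unimodal (minibatch_noise_law G P g K x i)
                                  \<and> symmetric0 (minibatch_noise_law G P g K x i)"
    thus "\<bar>g x $ i\<bar> - 2 * (1 / sqrt (real M) * sigma $ i / sqrt (real K))
            \<le> (\<integral>\<omega>. g x $ i * vote k x (\<lambda>t. W t \<omega>) $ i \<partial>Q)"
      using vote_correlation_ge_b[of k x i] by (simp add: mult.commute)
  qed (use assms in auto)
  thus ?thesis by simp
qed

end

theorem theorem2:
  fixes f :: "real^'d \<Rightarrow> real"
    and g :: "real^'d \<Rightarrow> real^'d"
    and fstar :: real
    and L sigma :: "real^'d"
    and P :: "'w measure"
    and G :: "real^'d \<Rightarrow> 'w \<Rightarrow> real^'d"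
    and Q :: "'a measure"
    and W :: "nat \<times> nat \<times> nat \<Rightarrow> 'a \<Rightarrow> 'w"
    and K M :: nat
    and x0 :: "real^'d"
  assumes grad: "\<And>x. (f has_derivative (\<lambda>h. g x \<bullet> h)) (at x)"
    and A1: "\<And>x. f x \<ge> fstar"
    and L_nonneg: "\<And>i. L $ i \<ge> 0"
    and A2: "\<And>x y. \<bar>f y - f x - g x \<bullet> (y - x)\<bar> \<le> (1/2) * (\<Sum>i\<in>UNIV. L $ i * (y $ i - x $ i)^2)"
    and P_prob: "prob_space P"
    and G_meas: "(\<lambda>(x, w). G x w) \<in> borel_measurable (borel \<Otimes>\<^sub>M P)"
    and sigma_nonneg: "\<And>i. sigma $ i \<ge> 0"
    and A3_int: "\<And>x i. integrable P (\<lambda>w. G x w $ i)"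
    and A3_mean: "\<And>x i. (\<integral>w. G x w $ i \<partial>P) = g x $ i"
    and A3_var: "\<And>x i. (\<integral>\<^sup>+ w. ennreal ((G x w $ i - g x $ i)^2) \<partial>P) \<le> ennreal ((sigma $ i)^2)"
    and L_pos: "l1 L > 0"
    and K_pos: "K \<ge> 1"
    and M_pos: "M \<ge> 1"
    and Q_prob: "prob_space Q"
    and W_indep: "prob_space.indep_vars Q (\<lambda>_. P) W ({..<K} \<times> {..<M} \<times> {..<K})"
    and W_law: "\<And>t. t \<in> {..<K} \<times> {..<M} \<times> {..<K} \<Longrightarrow> distr Q P (W t) = P"
  defines "X \<equiv> (\<lambda>k \<omega>. signsgd_mv G M (\<lambda>_. 1 / sqrt (l1 L * real K)) (\<lambda>_. K) x0 (\<lambda>t. W t \<omega>) k)"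
    and "N \<equiv> K^2"
  shows "integrable Q (\<lambda>\<omega>. (1 / real K) * (\<Sum>k<K. l1 (g (X k \<omega>))))
    \<and> (\<integral>\<omega>. (1 / real K) * (\<Sum>k<K. l1 (g (X k \<omega>))) \<partial>Q)^2
        \<le> 1 / sqrt (real N) * (sqrt (l1 L) * (f x0 - fstar + 1/2) + 2 * l1 sigma)^2
    \<and> ((\<forall>k<K. AE \<omega> in Q. \<forall>i. unimodal (minibatch_noise_law G P g K (X k \<omega>) i)
                              \<and> symmetric0 (minibatch_noise_law G P g K (X k \<omega>) i))
       \<longrightarrow> (\<integral>\<omega>. (1 / real K) * (\<Sum>k<K. l1 (g (X k \<omega>))) \<partial>Q)^2
        \<le> 1 / sqrt (real N) * (sqrt (l1 L) * (f x0 - fstar + 1/2) + 2 / sqrt (real M) * l1 sigma)^2)"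
proof -
  interpret S: signsgd f g L fstar sigma P G Q W K M x0
    by (intro signsgd.intro coordinatewise_smooth.intro signsgd_axioms.intro)
       (fact grad A1 L_nonneg A2 P_prob G_meas sigma_nonneg A3_int A3_mean A3_var L_pos K_pos M_pos
          Q_prob W_indep W_law)+
  have "X = S.X"
    unfolding X_def by (simp add: fun_eq_iff S.X_def S.iterate_def S.stepsize_def)
  thus ?thesis unfolding N_def
    using S.integrable_average_gradient S.average_gradient_squared_le_a S.average_gradient_squared_le_b
    by simp
qed

end
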